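(* Let $d\ge3$ and let $\phi(x,t;y)=\langle x,y\rangle+\psi(t;y)$ be a translation-invariant phase on $\mathbb{B}^{d-1}_{\varepsilon_0}\times\mathbb{B}^1_{\varepsilon_0}\times\mathbb{B}^{d-1}_{\varepsilon_0}$ satisfying Hörmander's non-degeneracy conditions $(H_1),(H_2)$ and Bourgain's condition at every point. Then there exist an open neighborhood $U$ of the origin in $\mathbb{R}^d$, a diffeomorphism $\kappa:U\to\kappa(U)\subset\mathbb{B}^{d-1}_{\varepsilon_0}\times\mathbb{B}^1_{\varepsilon_0}$, and smooth functions $h,q$ of $y$ and $f$ of $t$, with $\nabla^2_y h(y)$ non-degenerate, such that $$\phi(\kappa(x,t);y)=\langle x,y\rangle+t\,h(y)+q(y)+f(t)$$ for all $(x,t)\in U$ and $y\in\mathbb{B}^{d-1}_{\varepsilon_0}$ (after shrinking $\varepsilon_0$ if necessary). Consequently, for every $y$ and every $\mathbf z\in U$, $\{\mathbf z'\in U:\nabla_y\phi(\kappa(\mathbf z');y)=\nabla_y\phi(\kappa(\mathbf z);y)\}=U\cap\{\mathbf z+s(-\nabla h(y),1):s\in\mathbb{R}\}$, i.e. $\kappa^{-1}$ maps the Kakeya curves of $\phi$ into straight lines with directions $(-\nabla h(y),1)$, and curved Kakeya sets associated with $\phi$ are mapped by $\kappa^{-1}$ to sets containing such line segments for an open set of directions.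
   Context: Coordinates: $\mathbf x=(x,t)\in\mathbb{B}^{d-1}_{\varepsilon_0}\times\mathbb{B}^1_{\varepsilon_0}$, $y\in\mathbb{B}^{d-1}_{\varepsilon_0}$, $\mathbb{B}^k_r$ the $k$-dimensional ball of radius $r$ centered at $0$, $\varepsilon_0>0$ small depending on $\phi$; $\phi$ is smooth. Hörmander's conditions: $(H_1)$ $\mathrm{rank}\,\nabla_{\mathbf x}\nabla_y\phi(\mathbf x;y)=d-1$ everywhere; $(H_2)$ with $G_0(\mathbf x;y)=\bigwedge_{j=1}^{d-1}\partial_{y_j}\nabla_{\mathbf x}\phi(\mathbf x;y)$ (identified with a vector of $\mathbb{R}^d$, normal to the $d-1$ vectors $\partial_{y_j}\nabla_{\mathbf x}\phi$), one has $\det\nabla^2_y\langle\nabla_{\mathbf x}\phi(\mathbf x;y),G_0(\mathbf x;y_0)\rangle|_{y=y_0}\ne0$ for all $(\mathbf x,y_0)$. Translation-invariant: $\phi(x,t;y)=\langle x,y\rangle+\psi(t;y)$ with $\psi$ smooth and $\psi(0;y)=0$. Bourgain's condition at $(\mathbf x_0;y_0)$: there is a scalar $C(\mathbf x_0;y_0)$ such that for all $1\le i,j\le d-1$, $(G_0\cdot\nabla_{\mathbf x})^2\partial^2_{y_iy_j}\phi(\mathbf x_0;y_0)=C(\mathbf x_0;y_0)(G_0\cdot\nabla_{\mathbf x})\partial^2_{y_iy_j}\phi(\mathbf x_0;y_0)$, where $G_0=G_0(\mathbf x;y_0)$ is regarded as a vector field in $\mathbf x$ and the derivatives are evaluated at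 $\mathbf x=\mathbf x_0$, $y=y_0$. Kakeya curves: $\Gamma^\phi_y(\mathbf x)=\{\mathbf x':\nabla_y\phi(\mathbf x';y)=\nabla_y\phi(\mathbf x;y)\}$. A curved Kakeya set associated with $\phi$ is a set $E$ such that for every $y\in\mathbb{B}^{d-1}_{\varepsilon_0}$ there is $\omega\in\mathbb{B}^{d-1}_{\varepsilon_0}$ with $\Gamma^\phi_y((\omega,0))\subset E$. *)

theory Defs
  imports "HOL-Analysis.Analysis"
begin

text \<open>Conventions. R^(d-1) is the type real^'n (so d - 1 = CARD('n));
  R^d is (real^'n) \<times> real, a point being \<open>(x,t)\<close>.\<close>

coinductive smooth_on :: "'a::real_normed_vector set \<Rightarrow> ('a \<Rightarrow> 'b::real_normed_vector) \<Rightarrow> bool" where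
  "\<lbrakk>open S; f differentiable_on S; \<And>v. smooth_on S (\<lambda>x. frechet_derivative f (at x) v)\<rbrakk>
     \<Longrightarrow> smooth_on S f"

definition diffeo_on :: "'a::real_normed_vector set \<Rightarrow> ('a \<Rightarrow> 'a) \<Rightarrow> bool" where
  "diffeo_on U \<kappa> \<longleftrightarrow> open U \<and> inj_on \<kappa> U \<and> open (\<kappa> ` U) \<and> smooth_on U \<kappa>
      \<and> smooth_on (\<kappa> ` U) (the_inv_into U \<kappa>)"

definition dd :: "('a::real_normed_vector \<Rightarrow> 'b::real_normed_vector) \<Rightarrow> 'a \<Rightarrow> 'a \<Rightarrow> 'b" where
  "dd f p v = vector_derivative (\<lambda>s. f (p + s *\<^sub>R v)) (at 0)"

definition grad :: "('a::euclidean_space \<Rightarrow> real) \<Rightarrow> 'a \<Rightarrow> 'a" where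
  "grad f p = (\<Sum>b\<in>Basis. dd f p b *\<^sub>R b)"

definition hess :: "(real^'n \<Rightarrow> real) \<Rightarrow> real^'n \<Rightarrow> real^'n^'n" where
  "hess f p = (\<chi> i j. dd (\<lambda>p'. dd f p' (axis j 1)) p (axis i 1))"

text \<open>Generalized cross product (wedge) of d-1 vectors in R^d = (real^'n) \<times> real,
  identified with the vector G such that \<open>G \<bullet> w = det [v_1,...,v_(d-1), w]\<close>
  (t-coordinate last): t-component is det of the x-parts; the x_i-component is
  minus the determinant of the x-part matrix with row i replaced by the t-row.\<close>
definition wedge :: "('n::finite \<Rightarrow> (real^'n) \<times> real) \<Rightarrow> (real^'n) \<times> real" where
  "wedge v = ((\<chi> i. - det (\<chi> i' j. if i' = i then snd (v j) else fst (v j) $ i')),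
              det (\<chi> i j. fst (v j) $ i))"

type_synonym 'n phase = "(real^'n) \<times> real \<Rightarrow> real^'n \<Rightarrow> real"

definition Gvec :: "'n::finite phase \<Rightarrow> (real^'n) \<times> real \<Rightarrow> real^'n \<Rightarrow> 'n \<Rightarrow> (real^'n) \<times> real" where
  "Gvec \<phi> X y j = dd (\<lambda>y'. grad (\<lambda>X'. \<phi> X' y') X) y (axis j 1)"

definition G0 :: "'n::finite phase \<Rightarrow> (real^'n) \<times> real \<Rightarrow> real^'n \<Rightarrow> (real^'n) \<times> real" where
  "G0 \<phi> X y = wedge (Gvec \<phi> X y)"

definition dom_x :: "real \<Rightarrow> ((real^'n) \<times> real) set" where
  "dom_x \<epsilon> = ball 0 \<epsilon> \<times> ball 0 \<epsilon>"

text \<open>(H1): rank of the mixed Hessian (whose columns are the Gvec) is d-1.\<close>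
definition H1 :: "'n::finite phase \<Rightarrow> real \<Rightarrow> bool" where
  "H1 \<phi> \<epsilon> \<longleftrightarrow> (\<forall>X\<in>dom_x \<epsilon>. \<forall>y\<in>ball 0 \<epsilon>. dim (span (range (Gvec \<phi> X y))) = CARD('n))"

definition H2 :: "'n::finite phase \<Rightarrow> real \<Rightarrow> bool" where
  "H2 \<phi> \<epsilon> \<longleftrightarrow> (\<forall>X\<in>dom_x \<epsilon>. \<forall>y0\<in>ball 0 \<epsilon>.
      det (hess (\<lambda>y. grad (\<lambda>X'. \<phi> X' y) X \<bullet> G0 \<phi> X y0) y0) \<noteq> 0)"

definition Gder :: "'n::finite phase \<Rightarrow> real^'n \<Rightarrow> ((real^'n) \<times> real \<Rightarrow> real) \<Rightarrow> (real^'n) \<times> real \<Rightarrow> real" where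
  "Gder \<phi> y0 u X = dd u X (G0 \<phi> X y0)"

definition bourgain_at :: "'n::finite phase \<Rightarrow> (real^'n) \<times> real \<Rightarrow> real^'n \<Rightarrow> bool" where
  "bourgain_at \<phi> X0 y0 \<longleftrightarrow> (\<exists>C. \<forall>i j.
     let u = (\<lambda>X. dd (\<lambda>y. dd (\<lambda>y'. \<phi> X y') y (axis j 1)) y0 (axis i 1))
     in Gder \<phi> y0 (Gder \<phi> y0 u) X0 = C * Gder \<phi> y0 u X0)"

definition ti_phase :: "(real \<Rightarrow> real^'n \<Rightarrow> real) \<Rightarrow> 'n phase" where
  "ti_phase \<psi> = (\<lambda>(x,t) y. x \<bullet> y + \<psi> t y)"

definition kcurve :: "'n::finite phase \<Rightarrow> real \<Rightarrow> real^'n \<Rightarrow> (real^'n) \<times> real \<Rightarrow> ((real^'n) \<times> real) set" where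
  "kcurve \<phi> \<epsilon> y X = {X'\<in>dom_x \<epsilon>. grad (\<phi> X') y = grad (\<phi> X) y}"

definition curved_kakeya :: "'n::finite phase \<Rightarrow> real \<Rightarrow> ((real^'n) \<times> real) set \<Rightarrow> bool" where
  "curved_kakeya \<phi> \<epsilon> E \<longleftrightarrow> (\<forall>y\<in>ball 0 \<epsilon>. \<exists>\<omega>\<in>ball 0 \<epsilon>. kcurve \<phi> \<epsilon> y (\<omega>, 0) \<subseteq> E)"

end

theory Submission
  imports Defs
begin

text \<open>
  For a translation-invariant phase the vector \<open>G\<^sub>0\<close> has t-component 1, so Bourgain's condition
  says that the matrix \<open>N(t,y) = \<nabla>\<^sup>2\<^sub>y \<partial>\<^sub>t\<psi>(t,y)\<close>, invertible by (H2), satisfies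
  \<open>\<partial>\<^sub>t N = C(t,y) N\<close>. Hence \<open>N(t,y) = r(t,y) N(0,y)\<close>. Differentiating in \<open>y\<close> and using the
  symmetry of third derivatives gives \<open>\<partial>\<^sub>k r N\<^sub>i\<^sub>j = \<partial>\<^sub>i r N\<^sub>k\<^sub>j\<close>; as \<open>N(0,y)\<close> is invertible and
  \<open>d \<ge> 3\<close>, \<open>r = \<alpha>(t)\<close> does not depend on \<open>y\<close>. Integrating back, with \<open>\<psi>(0,\<cdot>) = 0\<close>, yields
  \<open>\<psi>(t,y) = A(t) h(y) + L(t)\<cdot>y + c(t)\<close> where \<open>A' = \<alpha> > 0\<close> and \<open>h = \<partial>\<^sub>t\<psi>(0,\<cdot>)\<close>.
  The change of variables \<open>\<kappa>(x,s) = (x - L(A\<^sup>-\<^sup>1 s), A\<^sup>-\<^sup>1 s)\<close> turns the phase into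
  \<open>\<langle>x,y\<rangle> + s h(y) + c(A\<^sup>-\<^sup>1 s)\<close>, whose Kakeya curves \<open>x + s \<nabla>h(y) = const\<close> are lines.
\<close>

section \<open>Higher differentiability\<close>

abbreviation fderiv :: "('a::real_normed_vector \<Rightarrow> 'b::real_normed_vector) \<Rightarrow> 'a \<Rightarrow> 'a \<Rightarrow> 'b" where
  "fderiv f x \<equiv> frechet_derivative f (at x)"

fun Ck_on :: "nat \<Rightarrow> 'a::real_normed_vector set \<Rightarrow> ('a \<Rightarrow> 'b::real_normed_vector) \<Rightarrow> bool" where
  "Ck_on 0 S f \<longleftrightarrow> open S \<and> continuous_on S f"
| "Ck_on (Suc k) S f \<longleftrightarrow> open S \<and> f differentiable_on S \<and> (\<forall>v. Ck_on k S (\<lambda>x. fderiv f x v))"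

lemma has_derivative_fderiv:
  "open S \<Longrightarrow> f differentiable_on S \<Longrightarrow> x \<in> S \<Longrightarrow> (f has_derivative fderiv f x) (at x)"
  using differentiable_on_eq_differentiable_at frechet_derivative_works by blast

lemma Ck_on_open: "Ck_on k S f \<Longrightarrow> open S"
  by (cases k) auto

lemma Ck_on_SucD: "Ck_on (Suc k) S f \<Longrightarrow> Ck_on k S f"
proof (induction k arbitrary: f)
  case 0
  then show ?case by (auto intro: differentiable_imp_continuous_on)
next
  case (Suc k)
  then show ?case by (metis Ck_on.simps(2))
qed

lemma Ck_on_has_derivative: "Ck_on (Suc k) S f \<Longrightarrow> x \<in> S \<Longrightarrow> (f has_derivative fderiv f x) (at x)"
  by (rule has_derivative_fderiv) auto

lemma Ck_on_cong: "Ck_on k S f \<Longrightarrow> (\<And>x. x \<in> S \<Longrightarrow> f x = g x) \<Longrightarrow> Ck_on k S g"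
proof (induction k arbitrary: f g)
  case 0
  then show ?case using continuous_on_cong by force
next
  case (Suc k)
  have S: "open S" and df: "\<And>x. x \<in> S \<Longrightarrow> (f has_derivative fderiv f x) (at x)"
    using Suc.prems(1) by (auto intro: Ck_on_has_derivative)
  have dg: "(g has_derivative fderiv f x) (at x)" if "x \<in> S" for x
    using has_derivative_transform_within_open[OF df[OF that] S that] Suc.prems(2) by metis
  then have "g differentiable_on S"
    using differentiable_at_imp_differentiable_on differentiable_def by blast
  moreover have "Ck_on k S (\<lambda>x. fderiv g x v)" for v
  proof (rule Suc.IH)
    show "Ck_on k S (\<lambda>x. fderiv f x v)" using Suc.prems(1) by simp
    show "fderiv f x v = fderiv g x v" if "x \<in> S" for x
      using frechet_derivative_at[OF dg[OF that]] by simp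
  qed
  ultimately show ?case using S by simp
qed

lemma Ck_on_SucI:
  assumes "open S" "\<And>x. x \<in> S \<Longrightarrow> (f has_derivative D x) (at x)"
    and "\<And>v. Ck_on k S (\<lambda>x. D x v)"
  shows "Ck_on (Suc k) S f"
proof -
  have "f differentiable_on S"
    using assms(2) differentiable_at_imp_differentiable_on differentiable_def by blast
  moreover have "Ck_on k S (\<lambda>x. fderiv f x v)" for v
    by (rule Ck_on_cong[OF assms(3)]) (simp add: frechet_derivative_at[OF assms(2)])
  ultimately show ?thesis using assms(1) by simp
qed

lemma Ck_on_subset: "Ck_on k S f \<Longrightarrow> open T \<Longrightarrow> T \<subseteq> S \<Longrightarrow> Ck_on k T f"
proof (induction k arbitrary: f)
  case 0 then show ?case by (auto intro: continuous_on_subset)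
next
  case (Suc k) then show ?case by (auto intro: differentiable_on_subset)
qed

lemma Ck_on_const: "open S \<Longrightarrow> Ck_on k S (\<lambda>x. c)"
proof (induction k arbitrary: c)
  case 0 then show ?case by simp
next
  case (Suc k)
  show ?case
    by (rule Ck_on_SucI[where D="\<lambda>x v. 0"]) (auto intro: Suc derivative_eq_intros)
qed

lemma Ck_on_id: "open S \<Longrightarrow> Ck_on k S (\<lambda>x. x)"
proof (induction k)
  case 0 then show ?case by (simp add: continuous_on_id)
next
  case (Suc k)
  show ?case
    by (rule Ck_on_SucI[where D="\<lambda>x v. v"]) (auto intro: Suc.prems Ck_on_const has_derivative_ident)
qed

lemma Ck_on_add: "Ck_on k S f \<Longrightarrow> Ck_on k S g \<Longrightarrow> Ck_on k S (\<lambda>x. f x + g x)"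
proof (induction k arbitrary: f g)
  case 0 then show ?case by (simp add: continuous_on_add)
next
  case (Suc k)
  show ?case
  proof (rule Ck_on_SucI[where D="\<lambda>x v. fderiv f x v + fderiv g x v"])
    show "((\<lambda>x. f x + g x) has_derivative (\<lambda>v. fderiv f x v + fderiv g x v)) (at x)" if "x \<in> S" for x
      using has_derivative_add[OF Ck_on_has_derivative[OF Suc.prems(1) that]
          Ck_on_has_derivative[OF Suc.prems(2) that]] .
    show "Ck_on k S (\<lambda>x. fderiv f x v + fderiv g x v)" for v
      using Suc.IH Suc.prems by simp
  qed (rule Ck_on_open[OF Suc.prems(1)])
qed

lemma Ck_on_linear: "bounded_linear l \<Longrightarrow> Ck_on k S f \<Longrightarrow> Ck_on k S (\<lambda>x. l (f x))"
proof (induction k arbitrary: f)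
  case 0 then show ?case
    by (auto intro: continuous_on_compose2[OF linear_continuous_on[OF 0(1)]])
next
  case (Suc k)
  show ?case
  proof (rule Ck_on_SucI[where D="\<lambda>x v. l (fderiv f x v)"])
    show "((\<lambda>x. l (f x)) has_derivative (\<lambda>v. l (fderiv f x v))) (at x)" if "x \<in> S" for x
      using bounded_linear.has_derivative[OF Suc.prems(1) Ck_on_has_derivative[OF Suc.prems(2) that]] .
    show "Ck_on k S (\<lambda>x. l (fderiv f x v))" for v
      using Suc.IH Suc.prems by simp
  qed (rule Ck_on_open[OF Suc.prems(2)])
qed

lemma Ck_on_diff:
  assumes f: "Ck_on k S f" and g: "Ck_on k S g"
  shows "Ck_on k S (\<lambda>x. f x - g x)"
proof -
  have "Ck_on k S (\<lambda>x. - g x)"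
    by (rule Ck_on_linear[OF bounded_linear_minus[OF bounded_linear_ident] g])
  from Ck_on_add[OF f this] show ?thesis by simp
qed

lemma Ck_on_scaleR: "Ck_on k S u \<Longrightarrow> Ck_on k S f \<Longrightarrow> Ck_on k S (\<lambda>x. u x *\<^sub>R f x)"
proof (induction k arbitrary: u f)
  case 0 then show ?case by (simp add: continuous_on_scaleR)
next
  case (Suc k)
  show ?case
  proof (rule Ck_on_SucI[where D="\<lambda>x v. u x *\<^sub>R fderiv f x v + fderiv u x v *\<^sub>R f x"])
    show "((\<lambda>x. u x *\<^sub>R f x) has_derivative (\<lambda>v. u x *\<^sub>R fderiv f x v + fderiv u x v *\<^sub>R f x)) (at x)"
      if "x \<in> S" for x
      using has_derivative_scaleR[OF Ck_on_has_derivative[OF Suc.prems(1) that]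
          Ck_on_has_derivative[OF Suc.prems(2) that]] .
    show "Ck_on k S (\<lambda>x. u x *\<^sub>R fderiv f x v + fderiv u x v *\<^sub>R f x)" for v
    proof (rule Ck_on_add)
      show "Ck_on k S (\<lambda>x. u x *\<^sub>R fderiv f x v)"
        using Suc.IH[OF Ck_on_SucD[OF Suc.prems(1)]] Suc.prems(2) by auto
      show "Ck_on k S (\<lambda>x. fderiv u x v *\<^sub>R f x)"
        using Suc.IH[OF _ Ck_on_SucD[OF Suc.prems(2)]] Suc.prems(1) by auto
    qed
  qed (rule Ck_on_open[OF Suc.prems(1)])
qed

lemma Ck_on_mult: "Ck_on k S u \<Longrightarrow> Ck_on k S w \<Longrightarrow> Ck_on k S (\<lambda>x. u x * w x :: real)"
  using Ck_on_scaleR[of k S u w] by simp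

lemma Ck_on_sum:
  "finite I \<Longrightarrow> open S \<Longrightarrow> (\<And>i. i \<in> I \<Longrightarrow> Ck_on k S (f i)) \<Longrightarrow> Ck_on k S (\<lambda>x. \<Sum>i\<in>I. f i x)"
  by (induction I rule: finite_induct) (simp_all add: Ck_on_const Ck_on_add)

lemma Ck_on_compose:
  fixes g :: "'b::euclidean_space \<Rightarrow> 'c::real_normed_vector" and f :: "'a::real_normed_vector \<Rightarrow> 'b"
  shows "Ck_on k T g \<Longrightarrow> Ck_on k S f \<Longrightarrow> f ` S \<subseteq> T \<Longrightarrow> Ck_on k S (\<lambda>x. g (f x))"
proof (induction k arbitrary: f g)
  case 0 then show ?case by (auto intro: continuous_on_compose2)
next
  case (Suc k)
  \<comment> \<open>The chain rule is expanded in a basis, so that the derivative is a sum of products.\<close>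
  define D where "D x v = (\<Sum>b\<in>Basis. (fderiv f x v \<bullet> b) *\<^sub>R fderiv g (f x) b)" for x v
  show ?case
  proof (rule Ck_on_SucI[where D=D])
    show "((\<lambda>x. g (f x)) has_derivative D x) (at x)" if x: "x \<in> S" for x
    proof -
      have df: "(f has_derivative fderiv f x) (at x)"
        using Ck_on_has_derivative[OF Suc.prems(2) x] .
      have dg: "(g has_derivative fderiv g (f x)) (at (f x))"
        using Ck_on_has_derivative[OF Suc.prems(1)] x Suc.prems(3) by blast
      have lin: "linear (fderiv g (f x))" using has_derivative_linear[OF dg] .
      have "fderiv g (f x) (fderiv f x v) = D x v" for v
      proof -
        have "fderiv g (f x) (fderiv f x v) = fderiv g (f x) (\<Sum>b\<in>Basis. (fderiv f x v \<bullet> b) *\<^sub>R b)"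
          by (simp add: euclidean_representation)
        also have "\<dots> = D x v"
          by (simp add: D_def linear_sum[OF lin] linear_scale[OF lin])
        finally show ?thesis .
      qed
      then show ?thesis
        using diff_chain_at[OF df dg] by (simp add: o_def fun_eq_iff)
    qed
    show "Ck_on k S (\<lambda>x. D x v)" for v
      unfolding D_def
    proof (rule Ck_on_sum)
      fix b :: 'b
      have "Ck_on k S (\<lambda>x. fderiv f x v \<bullet> b)"
        using Ck_on_linear[OF bounded_linear_inner_left, of k S "\<lambda>x. fderiv f x v" b] Suc.prems(2)
        by auto
      moreover have "Ck_on k S (\<lambda>x. fderiv g (f x) b)"
        using Suc.IH[of "\<lambda>y. fderiv g y b" f, OF _ Ck_on_SucD[OF Suc.prems(2)] Suc.prems(3)] Suc.prems(1)
        by simp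
      ultimately show "Ck_on k S (\<lambda>x. (fderiv f x v \<bullet> b) *\<^sub>R fderiv g (f x) b)" by (rule Ck_on_scaleR)
    qed (use Suc.prems in auto)
  qed (use Suc.prems in auto)
qed

lemma Ck_on_inverse:
  "Ck_on k S u \<Longrightarrow> (\<And>x. x \<in> S \<Longrightarrow> u x \<noteq> 0) \<Longrightarrow> Ck_on k S (\<lambda>x. inverse (u x) :: real)"
proof (induction k arbitrary: u)
  case 0 then show ?case by (simp add: continuous_on_inverse)
next
  case (Suc k)
  show ?case
  proof (rule Ck_on_SucI[where D="\<lambda>x v. - (inverse (u x) * fderiv u x v * inverse (u x))"])
    show "((\<lambda>x. inverse (u x)) has_derivative (\<lambda>v. - (inverse (u x) * fderiv u x v * inverse (u x)))) (at x)"
      if "x \<in> S" for x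
      using Deriv.has_derivative_inverse[OF Suc.prems(2)[OF that] Ck_on_has_derivative[OF Suc.prems(1) that]] .
    show "Ck_on k S (\<lambda>x. - (inverse (u x) * fderiv u x v * inverse (u x)))" for v
    proof -
      have "Ck_on k S (\<lambda>x. inverse (u x))"
        using Suc.IH[OF Ck_on_SucD[OF Suc.prems(1)]] Suc.prems(2) by blast
      then have "Ck_on k S (\<lambda>x. inverse (u x) * fderiv u x v * inverse (u x))"
        using Suc.prems(1) by (auto intro!: Ck_on_mult)
      then show ?thesis using Ck_on_linear[OF bounded_linear_minus[OF bounded_linear_ident]] by blast
    qed
  qed (rule Ck_on_open[OF Suc.prems(1)])
qed

lemma Ck_on_Pair:
  assumes f: "Ck_on k S f" and g: "Ck_on k S g"
  shows "Ck_on k S (\<lambda>x. (f x, g x))"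
proof -
  have "Ck_on k S (\<lambda>x. (f x, 0))"
    by (rule Ck_on_linear[OF _ f]) (intro bounded_linear_Pair bounded_linear_ident bounded_linear_zero)
  moreover have "Ck_on k S (\<lambda>x. (0, g x))"
    by (rule Ck_on_linear[OF _ g]) (intro bounded_linear_Pair bounded_linear_ident bounded_linear_zero)
  ultimately have "Ck_on k S (\<lambda>x. (f x, 0) + (0, g x))" by (rule Ck_on_add)
  then show ?thesis by simp
qed

lemma vec_lambda_eq_sum_axis: "(\<chi> i. g i) = (\<Sum>i\<in>UNIV. g i *\<^sub>R axis i (1::real))"
  by (simp add: vec_eq_iff axis_def if_distrib cong: if_cong)

lemma Ck_on_vec_lambda:
  fixes f :: "'n::finite \<Rightarrow> 'a::real_normed_vector \<Rightarrow> real"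
  shows "open S \<Longrightarrow> (\<And>i. Ck_on k S (f i)) \<Longrightarrow> Ck_on k S (\<lambda>x. \<chi> i. f i x)"
proof -
  assume S: "open S" and f: "\<And>i. Ck_on k S (f i)"
  have "Ck_on k S (\<lambda>x. \<Sum>i\<in>UNIV. f i x *\<^sub>R axis i (1::real))"
    by (intro Ck_on_sum Ck_on_scaleR f Ck_on_const S) auto
  then show ?thesis by (simp only: vec_lambda_eq_sum_axis[symmetric])
qed

lemma smooth_on_imp_Ck_on: "smooth_on S f \<Longrightarrow> Ck_on k S f"
proof (induction k arbitrary: f)
  case 0
  then show ?case by (cases rule: smooth_on.cases) (auto intro: differentiable_imp_continuous_on)
next
  case (Suc k)
  from Suc.prems show ?case by (cases rule: smooth_on.cases) (auto simp: Suc.IH)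
qed

lemma Ck_on_imp_smooth_on: "\<forall>k. Ck_on k S f \<Longrightarrow> smooth_on S f"
proof (coinduction arbitrary: f)
  case smooth_on
  have "open S" "f differentiable_on S"
    using smooth_on[rule_format, of 1] by auto
  moreover have "\<forall>k. Ck_on k S (\<lambda>x. fderiv f x v)" for v
    using smooth_on[rule_format, of "Suc _"] by simp
  ultimately show ?case by blast
qed

lemma smooth_on_iff_Ck_on: "smooth_on S f \<longleftrightarrow> (\<forall>k. Ck_on k S f)"
  using smooth_on_imp_Ck_on Ck_on_imp_smooth_on by blast

lemma smooth_on_continuous_on: "smooth_on S f \<Longrightarrow> continuous_on S f"
  using smooth_on_imp_Ck_on[of S f 0] by simp

lemma smooth_on_has_derivative: "smooth_on S f \<Longrightarrow> x \<in> S \<Longrightarrow> (f has_derivative fderiv f x) (at x)"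
  using Ck_on_has_derivative smooth_on_imp_Ck_on by blast

lemma smooth_on_cong: "smooth_on S f \<Longrightarrow> (\<And>x. x \<in> S \<Longrightarrow> f x = g x) \<Longrightarrow> smooth_on S g"
  using Ck_on_cong by (metis smooth_on_iff_Ck_on)

lemma smooth_on_subset: "smooth_on S f \<Longrightarrow> open T \<Longrightarrow> T \<subseteq> S \<Longrightarrow> smooth_on T f"
  using Ck_on_subset by (metis smooth_on_iff_Ck_on)

lemma smooth_on_const: "open S \<Longrightarrow> smooth_on S (\<lambda>x. c)"
  by (simp add: smooth_on_iff_Ck_on Ck_on_const)

lemma smooth_on_id: "open S \<Longrightarrow> smooth_on S (\<lambda>x. x)"
  by (simp add: smooth_on_iff_Ck_on Ck_on_id)

lemma smooth_on_linear: "bounded_linear l \<Longrightarrow> smooth_on S f \<Longrightarrow> smooth_on S (\<lambda>x. l (f x))"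
  by (simp add: smooth_on_iff_Ck_on Ck_on_linear)

lemma smooth_on_add: "smooth_on S f \<Longrightarrow> smooth_on S g \<Longrightarrow> smooth_on S (\<lambda>x. f x + g x)"
  by (simp add: smooth_on_iff_Ck_on Ck_on_add)

lemma smooth_on_diff: "smooth_on S f \<Longrightarrow> smooth_on S g \<Longrightarrow> smooth_on S (\<lambda>x. f x - g x)"
  by (simp add: smooth_on_iff_Ck_on Ck_on_diff)

lemma smooth_on_mult: "smooth_on S u \<Longrightarrow> smooth_on S w \<Longrightarrow> smooth_on S (\<lambda>x. u x * w x :: real)"
  by (simp add: smooth_on_iff_Ck_on Ck_on_mult)

lemma smooth_on_Pair: "smooth_on S f \<Longrightarrow> smooth_on S g \<Longrightarrow> smooth_on S (\<lambda>x. (f x, g x))"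
  by (simp add: smooth_on_iff_Ck_on Ck_on_Pair)

lemma smooth_on_fst: "open S \<Longrightarrow> smooth_on S fst"
  using smooth_on_linear[OF bounded_linear_fst smooth_on_id[of S]] by simp

lemma smooth_on_snd: "open S \<Longrightarrow> smooth_on S snd"
  using smooth_on_linear[OF bounded_linear_snd smooth_on_id[of S]] by simp

lemma smooth_on_vec_lambda:
  fixes f :: "'n::finite \<Rightarrow> 'a::real_normed_vector \<Rightarrow> real"
  shows "open S \<Longrightarrow> (\<And>i. smooth_on S (f i)) \<Longrightarrow> smooth_on S (\<lambda>x. \<chi> i. f i x)"
  by (simp add: smooth_on_iff_Ck_on Ck_on_vec_lambda)

lemma smooth_on_compose:
  fixes g :: "'b::euclidean_space \<Rightarrow> 'c::real_normed_vector" and f :: "'a::real_normed_vector \<Rightarrow> 'b"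
  shows "smooth_on T g \<Longrightarrow> smooth_on S f \<Longrightarrow> f ` S \<subseteq> T \<Longrightarrow> smooth_on S (\<lambda>x. g (f x))"
  unfolding smooth_on_iff_Ck_on using Ck_on_compose by blast

lemma has_derivative_inverse_function_real:
  fixes A \<tau> :: "real \<Rightarrow> real"
  assumes I: "open I" and s: "s \<in> I" and dA: "(A has_derivative fderiv A (\<tau> s)) (at (\<tau> s))"
    and nz: "fderiv A (\<tau> s) 1 \<noteq> 0" and inv: "\<And>s. s \<in> I \<Longrightarrow> A (\<tau> s) = s"
    and cont: "isCont \<tau> s"
  shows "(\<tau> has_derivative (\<lambda>v. inverse (fderiv A (\<tau> s) 1) * v)) (at s)"
proof -
  define c where "c = fderiv A (\<tau> s) 1"
  have "fderiv A (\<tau> s) v = c * v" for v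
    using linear_scale[OF has_derivative_linear[OF dA], of v 1] by (simp add: c_def)
  then have "fderiv A (\<tau> s) = (*) c" by (simp add: fun_eq_iff)
  then have dAr: "DERIV A (\<tau> s) :> c"
    using dA by (simp add: has_field_derivative_def)
  obtain e where e: "e > 0" "ball s e \<subseteq> I" using I s open_contains_ball by blast
  have "A (\<tau> y) = y" if "s - e < y" "y < s + e" for y
    using that e inv by (auto simp: dist_real_def abs_if subset_iff)
  then have "DERIV \<tau> s :> inverse c"
    using e nz cont
    by (intro DERIV_inverse_function[where a="s - e" and b="s + e" and g=\<tau> and x=s, OF dAr])
      (auto simp: c_def)
  then show ?thesis by (simp add: has_field_derivative_def c_def)
qed

lemma smooth_on_inverse_function_real:
  fixes A \<tau> :: "real \<Rightarrow> real"
  assumes I: "open I" and A: "smooth_on J A"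
    and nz: "\<And>t. t \<in> J \<Longrightarrow> fderiv A t 1 \<noteq> 0"
    and inv: "\<And>s. s \<in> I \<Longrightarrow> \<tau> s \<in> J \<and> A (\<tau> s) = s"
    and cont: "continuous_on I \<tau>"
  shows "smooth_on I \<tau>"
  unfolding smooth_on_iff_Ck_on
proof
  fix k show "Ck_on k I \<tau>"
  proof (induction k)
    case 0 then show ?case using I cont by simp
  next
    case (Suc k)
    show ?case
    proof (rule Ck_on_SucI[OF I])
      show "(\<tau> has_derivative (\<lambda>v. inverse (fderiv A (\<tau> s) 1) * v)) (at s)" if s: "s \<in> I" for s
        using inv cont s I continuous_on_eq_continuous_at
        by (intro has_derivative_inverse_function_real[OF I s] smooth_on_has_derivative[OF A] nz) auto
      show "Ck_on k I (\<lambda>s. inverse (fderiv A (\<tau> s) 1) * v)" for v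
      proof -
        have "Ck_on k J (\<lambda>t. fderiv A t 1)" using smooth_on_imp_Ck_on[OF A, of "Suc k"] by simp
        then have "Ck_on k I (\<lambda>s. fderiv A (\<tau> s) 1)"
          using Ck_on_compose[of k J "\<lambda>t. fderiv A t 1" I \<tau>] Suc.IH inv by auto
        then have "Ck_on k I (\<lambda>s. inverse (fderiv A (\<tau> s) 1))"
          by (rule Ck_on_inverse) (use nz inv in auto)
        then show ?thesis by (intro Ck_on_mult Ck_on_const I)
      qed
    qed
  qed
qed

definition dirderiv :: "('a::real_normed_vector \<Rightarrow> 'b::real_normed_vector) \<Rightarrow> 'a \<Rightarrow> 'a \<Rightarrow> 'b" where
  "dirderiv f v = (\<lambda>x. fderiv f x v)"

lemma smooth_on_dirderiv: "smooth_on S f \<Longrightarrow> smooth_on S (dirderiv f v)"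
  unfolding dirderiv_def by (erule smooth_on.cases) simp

subsection \<open>Second derivatives commute\<close>

lemma has_real_derivative_along_line:
  fixes f :: "'a::real_normed_vector \<Rightarrow> real"
  assumes "open S" "f differentiable_on S" and p: "p + \<sigma> *\<^sub>R v \<in> S"
  shows "((\<lambda>\<sigma>. f (p + \<sigma> *\<^sub>R v)) has_real_derivative fderiv f (p + \<sigma> *\<^sub>R v) v) (at \<sigma>)"
proof -
  have df: "(f has_derivative fderiv f (p + \<sigma> *\<^sub>R v)) (at (p + \<sigma> *\<^sub>R v))"
    using has_derivative_fderiv[OF assms] .
  have "((\<lambda>\<sigma>. p + \<sigma> *\<^sub>R v) has_derivative (\<lambda>h. h *\<^sub>R v)) (at \<sigma>)"
    by (auto intro!: derivative_eq_intros)
  from diff_chain_at[OF this df]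
  have "((\<lambda>\<sigma>. f (p + \<sigma> *\<^sub>R v)) has_derivative (\<lambda>h. fderiv f (p + \<sigma> *\<^sub>R v) (h *\<^sub>R v))) (at \<sigma>)"
    by (simp add: o_def)
  moreover have "fderiv f (p + \<sigma> *\<^sub>R v) (h *\<^sub>R v) = fderiv f (p + \<sigma> *\<^sub>R v) v * h" for h
    using linear_scale[OF has_derivative_linear[OF df]] by simp
  ultimately show ?thesis by (simp add: has_field_derivative_def)
qed

lemma second_difference_mean_value:
  fixes f :: "'a::real_normed_vector \<Rightarrow> real"
  assumes C: "Ck_on 2 S f" and s: "s > 0"
    and sub: "\<And>a b. 0 \<le> a \<Longrightarrow> a \<le> s \<Longrightarrow> 0 \<le> b \<Longrightarrow> b \<le> s \<Longrightarrow> x + a *\<^sub>R v + b *\<^sub>R w \<in> S"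
  obtains a b where "0 \<le> a" "a \<le> s" "0 \<le> b" "b \<le> s"
    "f (x + s *\<^sub>R v + s *\<^sub>R w) - f (x + s *\<^sub>R v) - f (x + s *\<^sub>R w) + f x
       = s * s * fderiv (\<lambda>z. fderiv f z v) (x + a *\<^sub>R v + b *\<^sub>R w) w"
proof -
  have S: "open S" "f differentiable_on S" "(\<lambda>z. fderiv f z v) differentiable_on S"
    using C by (auto simp: numeral_2_eq_2)
  define g where "g \<sigma> = f (x + s *\<^sub>R w + \<sigma> *\<^sub>R v) - f (x + \<sigma> *\<^sub>R v)" for \<sigma>
  have "DERIV g \<sigma> :> fderiv f (x + s *\<^sub>R w + \<sigma> *\<^sub>R v) v - fderiv f (x + \<sigma> *\<^sub>R v) v"
    if "0 \<le> \<sigma>" "\<sigma> \<le> s" for \<sigma>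
    unfolding g_def using sub[of \<sigma> s] sub[of \<sigma> 0] that s
    by (intro DERIV_diff has_real_derivative_along_line[OF S(1,2)]) (auto simp: algebra_simps)
  from MVT2[OF s this] obtain a where a: "0 < a" "a < s"
    "g s - g 0 = s * (fderiv f (x + s *\<^sub>R w + a *\<^sub>R v) v - fderiv f (x + a *\<^sub>R v) v)"
    by auto
  define k where "k \<rho> = fderiv f (x + a *\<^sub>R v + \<rho> *\<^sub>R w) v" for \<rho>
  have "DERIV k \<rho> :> fderiv (\<lambda>z. fderiv f z v) (x + a *\<^sub>R v + \<rho> *\<^sub>R w) w" if "0 \<le> \<rho>" "\<rho> \<le> s" for \<rho>
    unfolding k_def using sub[of a \<rho>] that a
    by (intro has_real_derivative_along_line[OF S(1,3), of "x + a *\<^sub>R v"]) auto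
  from MVT2[OF s this] obtain b where b: "0 < b" "b < s"
    "k s - k 0 = s * fderiv (\<lambda>z. fderiv f z v) (x + a *\<^sub>R v + b *\<^sub>R w) w"
    by auto
  have "f (x + s *\<^sub>R v + s *\<^sub>R w) - f (x + s *\<^sub>R v) - f (x + s *\<^sub>R w) + f x = g s - g 0"
    unfolding g_def by (simp add: algebra_simps)
  also have "\<dots> = s * (k s - k 0)" using a(3) unfolding k_def by (simp add: algebra_simps)
  also have "\<dots> = s * s * fderiv (\<lambda>z. fderiv f z v) (x + a *\<^sub>R v + b *\<^sub>R w) w" using b(3) by simp
  finally show ?thesis using a(1,2) b(1,2) by (intro that[of a b]) auto
qed

lemma dist_add_scaleR_le:
  fixes v w :: "'a::real_normed_vector"
  assumes "0 \<le> a" "a \<le> s" "0 \<le> b" "b \<le> s"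
  shows "dist (x + a *\<^sub>R v + b *\<^sub>R w) x \<le> s * (norm v + norm w)"
proof -
  have "dist (x + a *\<^sub>R v + b *\<^sub>R w) x \<le> a * norm v + b * norm w"
    using assms norm_triangle_ineq[of "a *\<^sub>R v" "b *\<^sub>R w"] by (simp add: dist_norm)
  also have "\<dots> \<le> s * (norm v + norm w)"
    using assms by (simp add: distrib_left add_mono mult_right_mono)
  finally show ?thesis .
qed

lemma second_difference_tendsto:
  fixes f :: "'a::real_normed_vector \<Rightarrow> real"
  assumes C: "Ck_on 2 S f" and x: "x \<in> S"
  shows "((\<lambda>s. (f (x + s *\<^sub>R v + s *\<^sub>R w) - f (x + s *\<^sub>R v) - f (x + s *\<^sub>R w) + f x) / (s * s))
           \<longlongrightarrow> fderiv (\<lambda>z. fderiv f z v) x w) (at_right 0)"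
  unfolding tendsto_iff
proof (intro allI impI)
  fix \<gamma> :: real assume "\<gamma> > 0"
  define F where "F z = fderiv (\<lambda>z. fderiv f z v) z w" for z
  have S: "open S" using C Ck_on_open by blast
  have "continuous_on S F"
    using C by (auto simp: numeral_2_eq_2 F_def)
  then obtain d where d: "d > 0" "\<And>z. dist z x < d \<Longrightarrow> dist (F z) (F x) < \<gamma>"
    using \<open>\<gamma> > 0\<close> x S unfolding continuous_on_eq_continuous_at[OF S] continuous_at_eps_delta by metis
  obtain d0 where d0: "d0 > 0" "ball x d0 \<subseteq> S" using S x open_contains_ball by blast
  define r where "r = min d d0 / (norm v + norm w + 1)"
  have pos: "norm v + norm w + 1 > 0" by (smt (verit) norm_ge_zero)
  have r: "r > 0" using d d0 pos by (simp add: r_def)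
  have near: "dist (x + a *\<^sub>R v + b *\<^sub>R w) x < min d d0"
    if "0 \<le> a" "a \<le> s" "0 \<le> b" "b \<le> s" "s < r" for a b s
  proof -
    have "s * (norm v + norm w + 1) < min d d0" using that pos by (simp add: r_def field_simps)
    then show ?thesis using dist_add_scaleR_le[OF that(1-4), of x v w] that(1,2) by (simp add: algebra_simps)
  qed
  show "\<forall>\<^sub>F s in at_right 0. dist ((f (x + s *\<^sub>R v + s *\<^sub>R w) - f (x + s *\<^sub>R v) - f (x + s *\<^sub>R w) + f x) / (s * s))
      (fderiv (\<lambda>z. fderiv f z v) x w) < \<gamma>"
    unfolding eventually_at_right_field
  proof (intro exI[of _ r] conjI allI impI r)
    fix s :: real assume s: "0 < s" "s < r"
    have "x + a *\<^sub>R v + b *\<^sub>R w \<in> S" if "0 \<le> a" "a \<le> s" "0 \<le> b" "b \<le> s" for a b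
      using near[OF that s(2)] d0(2) by (auto simp: dist_commute)
    then obtain a b where ab: "0 \<le> a" "a \<le> s" "0 \<le> b" "b \<le> s"
      "f (x + s *\<^sub>R v + s *\<^sub>R w) - f (x + s *\<^sub>R v) - f (x + s *\<^sub>R w) + f x = s * s * F (x + a *\<^sub>R v + b *\<^sub>R w)"
      using second_difference_mean_value[OF C s(1)] unfolding F_def by metis
    then show "dist ((f (x + s *\<^sub>R v + s *\<^sub>R w) - f (x + s *\<^sub>R v) - f (x + s *\<^sub>R w) + f x) / (s * s))
        (fderiv (\<lambda>z. fderiv f z v) x w) < \<gamma>"
      using d(2) near[OF ab(1-4) s(2)] s(1) by (simp add: F_def)
  qed
qed

lemma fderiv_fderiv_commute:
  fixes f :: "'a::real_normed_vector \<Rightarrow> real"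
  assumes "Ck_on 2 S f" "x \<in> S"
  shows "fderiv (\<lambda>z. fderiv f z v) x w = fderiv (\<lambda>z. fderiv f z w) x v"
proof -
  have eq: "(\<lambda>s. (f (x + s *\<^sub>R w + s *\<^sub>R v) - f (x + s *\<^sub>R w) - f (x + s *\<^sub>R v) + f x) / (s * s))
      = (\<lambda>s. (f (x + s *\<^sub>R v + s *\<^sub>R w) - f (x + s *\<^sub>R v) - f (x + s *\<^sub>R w) + f x) / (s * s))"
    by (simp add: fun_eq_iff algebra_simps)
  show ?thesis
    using tendsto_unique[OF trivial_limit_at_right_real second_difference_tendsto[OF assms, of v w]
        second_difference_tendsto[OF assms, of w v, unfolded eq]] .
qed

lemma dd_eq_if_has_derivative:
  assumes "(f has_derivative f') (at p)"
  shows "dd f p v = f' v"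
proof -
  have "((\<lambda>s. p + s *\<^sub>R v) has_derivative (\<lambda>h. h *\<^sub>R v)) (at 0)"
    by (auto intro!: derivative_eq_intros)
  from diff_chain_at[OF this] assms
  have "((\<lambda>s. f (p + s *\<^sub>R v)) has_derivative (\<lambda>h. f' (h *\<^sub>R v))) (at 0)"
    by (simp add: o_def)
  then have "((\<lambda>s. f (p + s *\<^sub>R v)) has_vector_derivative f' v) (at 0)"
    using linear_scale[OF has_derivative_linear[OF assms]] by (simp add: has_vector_derivative_def)
  then show ?thesis unfolding dd_def by (rule vector_derivative_at)
qed

lemma dd_eq_if_has_derivative_on_open:
  assumes "open S" "p \<in> S" "\<And>z. z \<in> S \<Longrightarrow> f z = g z" "(g has_derivative g') (at p)"
  shows "dd f p v = g' v"
  using has_derivative_transform_within_open[OF assms(4,1,2)] assms(3)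
  by (metis dd_eq_if_has_derivative)

lemma fderiv_eq_on_open:
  assumes "open S" "p \<in> S" "\<And>z. z \<in> S \<Longrightarrow> f z = g z" "smooth_on S g"
  shows "fderiv f p = fderiv g p"
  using has_derivative_transform_within_open[OF smooth_on_has_derivative[OF assms(4,2)] assms(1,2)]
    assms(3) frechet_derivative_at by metis

lemma sum_Basis_vec_axis:
  fixes f :: "real^'n::finite \<Rightarrow> real"
  shows "(\<Sum>b\<in>Basis. f b *\<^sub>R b) = (\<chi> i. f (axis i 1))"
proof -
  have "inj (\<lambda>i::'n. axis i (1::real))" by (auto simp: inj_def axis_eq_axis)
  moreover have "(Basis :: (real^'n) set) = range (\<lambda>i. axis i 1)" by (auto simp: Basis_vec_def)
  ultimately show ?thesis
    using sum.reindex[of "\<lambda>i::'n. axis i (1::real)" UNIV "\<lambda>b. f b *\<^sub>R b"]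
    by (simp add: vec_lambda_eq_sum_axis)
qed

lemma grad_eq_if_has_derivative:
  fixes F :: "real^'n::finite \<Rightarrow> real"
  assumes "(F has_derivative F') (at y)"
  shows "grad F y = (\<chi> i. F' (axis i 1))"
  unfolding grad_def using dd_eq_if_has_derivative[OF assms] sum_Basis_vec_axis by simp

lemma grad_prod_eq_if_has_derivative:
  fixes F :: "'a::euclidean_space \<times> real \<Rightarrow> real"
  assumes "(F has_derivative F') (at p)"
  shows "grad F p = ((\<Sum>u\<in>Basis. F' (u, 0) *\<^sub>R u), F' (0, 1))"
  unfolding grad_def dd_eq_if_has_derivative[OF assms] sum_Basis_prod_eq
  by (simp add: prod_eq_iff fst_sum snd_sum)

lemma has_derivative_vec_lambda:
  fixes f :: "'n::finite \<Rightarrow> 'a::real_normed_vector \<Rightarrow> real"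
  assumes "\<And>i. (f i has_derivative f' i) (at a)"
  shows "((\<lambda>x. \<chi> i. f i x) has_derivative (\<lambda>h. \<chi> i. f' i h)) (at a)"
  unfolding vec_lambda_eq_sum_axis
  by (intro has_derivative_sum has_derivative_scaleR_left assms)

lemma matrix_lambda_eq_sum_axis:
  "(\<chi> i j. g i j) = (\<Sum>i\<in>UNIV. \<Sum>j\<in>UNIV. g i j *\<^sub>R axis i (axis j (1::real)))"
proof -
  have "(\<Sum>j\<in>UNIV. g i j * (axis i (axis j (1::real)) $ a $ b)) = (if i = a then g i b else 0)" for i a b
    by (cases "i = a") (simp_all add: axis_def if_distrib cong: if_cong)
  then show ?thesis by (simp add: vec_eq_iff sum_component)
qed

lemma has_derivative_matrix_lambda:
  fixes f :: "'n::finite \<Rightarrow> 'm::finite \<Rightarrow> 'a::real_normed_vector \<Rightarrow> real"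
  assumes "\<And>i j. (f i j has_derivative f' i j) (at a)"
  shows "((\<lambda>x. \<chi> i j. f i j x) has_derivative (\<lambda>h. \<chi> i j. f' i j h)) (at a)"
  unfolding matrix_lambda_eq_sum_axis
  by (intro has_derivative_sum has_derivative_scaleR_left assms)

lemma open_image_if_has_derivative_right_inverse:
  fixes F :: "'a::euclidean_space \<Rightarrow> 'b::euclidean_space"
  assumes V: "open V" and c: "continuous_on V F"
    and d: "\<And>y. y \<in> V \<Longrightarrow> \<exists>F' g'. (F has_derivative F') (at y) \<and> bounded_linear g' \<and> F' \<circ> g' = id"
  shows "open (F ` V)"
proof -
  have "F y \<in> interior (F ` V)" if y: "y \<in> V" for y
  proof -
    obtain F' g' where "(F has_derivative F') (at y)" "bounded_linear g'" "F' \<circ> g' = id"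
      using d[OF y] by blast
    then show ?thesis
      using sussmann_open_mapping[OF V c y, of F' g' V] V y by (simp add: interior_open)
  qed
  then have "F ` V \<subseteq> interior (F ` V)" by blast
  then show ?thesis using interior_subset by (metis open_interior subset_antisym)
qed

lemma open_image_if_has_real_derivative_nonzero:
  fixes A :: "real \<Rightarrow> real"
  assumes V: "open V" and dA: "\<And>t. t \<in> V \<Longrightarrow> (A has_real_derivative D t) (at t)"
    and nz: "\<And>t. t \<in> V \<Longrightarrow> D t \<noteq> 0"
  shows "open (A ` V)"
proof (rule open_image_if_has_derivative_right_inverse[OF V])
  show "continuous_on V A"
    using dA by (meson DERIV_isCont continuous_at_imp_continuous_on)
  fix t assume t: "t \<in> V"
  have "(A has_derivative (\<lambda>h. D t * h)) (at t)" using dA[OF t] by (simp add: has_field_derivative_def)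
  moreover have "(\<lambda>h. D t * h) \<circ> (\<lambda>h. h / D t) = id" using nz[OF t] by (auto simp: fun_eq_iff)
  ultimately show "\<exists>F' g'. (A has_derivative F') (at t) \<and> bounded_linear g' \<and> F' \<circ> g' = id"
    using bounded_linear_divide by blast
qed

lemma det_zero_if_row_multiple:
  fixes A :: "real^'n::finite^'n"
  assumes ik: "i \<noteq> k" and r: "\<And>j. A $ i $ j = c * A $ k $ j"
  shows "det A = 0"
proof -
  have "det (\<chi> m. if m = i then row i A + (- c) *s row k A else row m A) = det A"
    by (rule det_row_operation[OF ik])
  moreover have "det (\<chi> m. if m = i then row i A + (- c) *s row k A else row m A) = 0"
    by (rule det_zero_row(1)[of i]) (simp add: row_def vec_eq_iff r)
  ultimately show ?thesis by simp
qed

text \<open>If some \<open>c\<^sub>k \<noteq> 0\<close>, rows \<open>i \<noteq> k\<close> of \<open>M\<close> would be proportional.\<close>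
lemma zero_if_rows_cross_proportional:
  fixes M :: "real^'n::finite^'n" and c :: "'n \<Rightarrow> real"
  assumes dim: "CARD('n) \<ge> 2" and M: "det M \<noteq> 0"
    and cross: "\<And>i j k. c k * M $ i $ j = c i * M $ k $ j"
  shows "c k = 0"
proof (rule ccontr)
  assume ck: "c k \<noteq> 0"
  have "UNIV \<noteq> {k}"
  proof
    assume "UNIV = {k}"
    then have "CARD('n) = 1" by (metis card.empty card_insert_disjoint empty_iff finite.emptyI One_nat_def)
    with dim show False by simp
  qed
  then obtain i where ik: "i \<noteq> k" by blast
  have "det M = 0"
    by (rule det_zero_if_row_multiple[OF ik, where c="c i / c k"]) (use cross[where i=i and k=k] ck in \<open>simp add: field_simps\<close>)
  with M show False by simp
qed

lemma eq_norm_divide_scaleR_if_has_derivative_proportional: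
  fixes F :: "real \<Rightarrow> 'a::real_inner"
  assumes I: "open I" "connected I" "s \<in> I" "t \<in> I"
    and nz: "\<And>r. r \<in> I \<Longrightarrow> F r \<noteq> 0"
    and dF: "\<And>r. r \<in> I \<Longrightarrow> (F has_derivative (\<lambda>h. h *\<^sub>R (c r *\<^sub>R F r))) (at r)"
  shows "F t = (norm (F t) / norm (F s)) *\<^sub>R F s"
proof -
  \<comment> \<open>The direction \<open>F / norm F\<close> has derivative zero.\<close>
  define u where "u r = inverse (norm (F r)) *\<^sub>R F r" for r
  have "(u has_derivative (\<lambda>h. 0)) (at r)" if r: "r \<in> I" for r
  proof -
    have n: "norm (F r) \<noteq> 0" using nz[OF r] by simp
    have ns: "F r \<bullet> sgn (F r) = norm (F r)"
      using n by (simp add: sgn_div_norm divide_inverse power2_eq_square flip: power2_norm_eq_inner)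
    have dn: "((\<lambda>r. norm (F r)) has_derivative (\<lambda>h. h * c r * norm (F r))) (at r)"
      using diff_chain_at[OF dF[OF r] has_derivative_norm[OF nz[OF r]]] by (simp add: o_def ns)
    have "(u has_derivative (\<lambda>h. inverse (norm (F r)) *\<^sub>R (h *\<^sub>R (c r *\<^sub>R F r))
        + (- (inverse (norm (F r)) * (h * c r * norm (F r)) * inverse (norm (F r)))) *\<^sub>R F r)) (at r)"
      unfolding u_def using has_derivative_scaleR[OF Deriv.has_derivative_inverse[OF n dn] dF[OF r]] .
    then show ?thesis using n by (simp add: field_simps)
  qed
  then have "u t = u s"
    using has_derivative_zero_unique_connected[OF I(1,2)] I(3,4) by blast
  have "F t = norm (F t) *\<^sub>R u t" using nz[OF I(4)] by (simp add: u_def)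
  also have "\<dots> = (norm (F t) / norm (F s)) *\<^sub>R F s"
    using \<open>u t = u s\<close> by (simp add: u_def divide_inverse)
  finally show ?thesis .
qed

section \<open>Translation-invariant phases\<close>

definition dir_t :: "real \<times> (real^'n)" where "dir_t = (1, 0)"
definition dir_y :: "'n::finite \<Rightarrow> real \<times> (real^'n)" where "dir_y i = (0, axis i 1)"

lemma has_derivative_slice_y:
  fixes G :: "real \<times> 'a::real_normed_vector \<Rightarrow> 'b::real_normed_vector"
  assumes "smooth_on S G" "(t, y) \<in> S"
  shows "((\<lambda>y'. G (t, y')) has_derivative (\<lambda>h. fderiv G (t, y) (0, h))) (at y)"
proof -
  have "((\<lambda>y'. (t, y')) has_derivative (\<lambda>h. (0, h))) (at y)"
    by (auto intro!: derivative_eq_intros)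
  from diff_chain_at[OF this smooth_on_has_derivative[OF assms]] show ?thesis by (simp add: o_def)
qed

lemma has_derivative_slice_t:
  fixes G :: "real \<times> 'a::real_normed_vector \<Rightarrow> 'b::real_normed_vector"
  assumes "smooth_on S G" "(t, y) \<in> S"
  shows "((\<lambda>t'. G (t', y)) has_derivative (\<lambda>h. fderiv G (t, y) (h, 0))) (at t)"
proof -
  have "((\<lambda>t'. (t', y)) has_derivative (\<lambda>h. (h, 0))) (at t)"
    by (auto intro!: derivative_eq_intros)
  from diff_chain_at[OF this smooth_on_has_derivative[OF assms]] show ?thesis by (simp add: o_def)
qed

lemma has_derivative_slice_snd:
  fixes G :: "real \<times> 'a::real_normed_vector \<Rightarrow> 'b::real_normed_vector"
  assumes "smooth_on S G" "(snd X, y) \<in> S"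
  shows "((\<lambda>X'::'c::real_normed_vector \<times> real. G (snd X', y)) has_derivative
           (\<lambda>h. fderiv G (snd X, y) (snd h, 0))) (at X)"
proof -
  have "((\<lambda>X'::'c \<times> real. (snd X', y)) has_derivative (\<lambda>h. (snd h, 0))) (at X)"
    by (auto intro!: derivative_eq_intros)
  from diff_chain_at[OF this smooth_on_has_derivative[OF assms]] show ?thesis by (simp add: o_def)
qed

lemma fderiv_y_eq_sum_dir_y:
  assumes "smooth_on S (G :: real \<times> (real^'n::finite) \<Rightarrow> 'b::real_normed_vector)" "z \<in> S"
  shows "fderiv G z (0, h) = (\<Sum>i\<in>UNIV. h $ i *\<^sub>R dirderiv G (dir_y i) z)"
proof -
  have lin: "linear (fderiv G z)" using smooth_on_has_derivative[OF assms] has_derivative_linear by blast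
  have "(0::real, h) = (\<Sum>i\<in>UNIV. h $ i *\<^sub>R dir_y i)"
    using basis_expansion[of h] by (simp add: dir_y_def prod_eq_iff fst_sum snd_sum scalar_mult_eq_scaleR)
  then show ?thesis by (simp add: linear_sum[OF lin] linear_scale[OF lin] dirderiv_def)
qed

lemma fderiv_t_eq_dir_t:
  assumes "smooth_on S (G :: real \<times> (real^'n) \<Rightarrow> 'b::real_normed_vector)" "z \<in> S"
  shows "fderiv G z (h, 0) = h *\<^sub>R dirderiv G dir_t z"
  using linear_scale[OF has_derivative_linear[OF smooth_on_has_derivative[OF assms]], of h dir_t]
  by (simp add: dir_t_def dirderiv_def)

locale translation_invariant_phase =
  fixes \<psi> :: "real \<Rightarrow> real^'n::finite \<Rightarrow> real" and \<epsilon>0 :: real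
  assumes eps: "\<epsilon>0 > 0" and smooth_psi: "smooth_on (ball 0 \<epsilon>0 \<times> ball 0 \<epsilon>0) (\<lambda>(t, y). \<psi> t y)"
begin

abbreviation "\<Psi> \<equiv> \<lambda>(t, y). \<psi> t y"
abbreviation "S0 \<equiv> ball (0::real) \<epsilon>0 \<times> ball (0::real^'n) \<epsilon>0"
abbreviation "\<phi> \<equiv> ti_phase \<psi>"

abbreviation "psi_yy i j \<equiv> dirderiv (dirderiv \<Psi> (dir_y j)) (dir_y i)"
abbreviation "psi_tyy i j \<equiv> dirderiv (dirderiv (dirderiv \<Psi> dir_t) (dir_y j)) (dir_y i)"

definition hess_t :: "real \<Rightarrow> real^'n \<Rightarrow> real^'n^'n" where
  "hess_t t y = (\<chi> i j. psi_tyy i j (t, y))"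

lemma open_S0: "open S0"
  by (simp add: open_Times)

lemma smooth_psi_yy: "smooth_on S0 (psi_yy i j)"
  by (intro smooth_on_dirderiv smooth_psi)

lemma smooth_psi_tyy: "smooth_on S0 (psi_tyy i j)"
  by (intro smooth_on_dirderiv smooth_psi)

lemma ti_phase_apply: "\<phi> X y = fst X \<bullet> y + \<psi> (snd X) y"
  by (simp add: ti_phase_def split_beta)

lemma has_derivative_psi_y:
  assumes "\<bar>t\<bar> < \<epsilon>0" "norm y < \<epsilon>0"
  shows "(\<psi> t has_derivative (\<lambda>h. fderiv \<Psi> (t, y) (0, h))) (at y)"
  using has_derivative_slice_y[OF smooth_psi, of t y] assms by simp

lemma grad_x_ti_phase:
  assumes "\<bar>t\<bar> < \<epsilon>0" "norm y < \<epsilon>0"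
  shows "grad (\<lambda>X. \<phi> X y) (x, t) = (y, dirderiv \<Psi> dir_t (t, y))"
proof -
  have "((\<lambda>X. \<phi> X y) has_derivative (\<lambda>h. fst h \<bullet> y + fderiv \<Psi> (t, y) (snd h, 0))) (at (x, t))"
    unfolding ti_phase_apply
    using has_derivative_slice_snd[OF smooth_psi, of "(x, t)" y] assms
    by (auto intro!: derivative_eq_intros)
  moreover have "(\<Sum>u\<in>Basis. (u \<bullet> y) *\<^sub>R u) = y"
    using euclidean_representation[of y] by (simp add: inner_commute)
  ultimately show ?thesis
    using linear_0[OF has_derivative_linear[OF smooth_on_has_derivative[OF smooth_psi, of "(t, y)"]]] assms
    by (simp add: grad_prod_eq_if_has_derivative dirderiv_def dir_t_def zero_prod_def[symmetric])
qed

lemma Gvec_ti_phase: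
  assumes "\<bar>snd X\<bar> < \<epsilon>0" "norm y0 < \<epsilon>0"
  shows "Gvec \<phi> X y0 j = (axis j 1, dirderiv (dirderiv \<Psi> dir_t) (dir_y j) (snd X, y0))"
proof -
  obtain x t where X: "X = (x, t)" by fastforce
  have "Gvec \<phi> X y0 j = (\<lambda>h. (h, fderiv (dirderiv \<Psi> dir_t) (t, y0) (0, h))) (axis j 1)"
    unfolding Gvec_def
  proof (rule dd_eq_if_has_derivative_on_open[where S="ball 0 \<epsilon>0"])
    show "grad (\<lambda>X'. \<phi> X' z) X = (z, dirderiv \<Psi> dir_t (t, z))" if "z \<in> ball 0 \<epsilon>0" for z
      using grad_x_ti_phase[of t z x] that assms X by simp
    show "((\<lambda>z. (z, dirderiv \<Psi> dir_t (t, z))) has_derivative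
        (\<lambda>h. (h, fderiv (dirderiv \<Psi> dir_t) (t, y0) (0, h)))) (at y0)"
      using assms X
      by (intro has_derivative_Pair has_derivative_ident has_derivative_slice_y[where S=S0] smooth_on_dirderiv smooth_psi)
        auto
  qed (use assms in auto)
  then show ?thesis by (simp add: dirderiv_def dir_y_def X)
qed

text \<open>The x-parts of the vectors \<open>Gvec\<close> form the identity matrix.\<close>
lemma snd_G0_ti_phase:
  assumes "\<bar>snd X\<bar> < \<epsilon>0" "norm y0 < \<epsilon>0"
  shows "snd (G0 \<phi> X y0) = 1"
proof -
  have "(\<chi> i j. fst (Gvec \<phi> X y0 j) $ i) = (mat 1 :: real^'n^'n)"
    using Gvec_ti_phase[OF assms] by (simp add: vec_eq_iff mat_def axis_def)
  then show ?thesis by (simp add: G0_def wedge_def det_I)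
qed

lemma det_hess_t_if_H2:
  assumes h2: "H2 \<phi> \<epsilon>0" and t: "\<bar>t\<bar> < \<epsilon>0" and y0: "norm y0 < \<epsilon>0"
  shows "det (hess_t t y0) \<noteq> 0"
proof -
  define G where "G = G0 \<phi> (0::real^'n, t) y0"
  define F where "F y = grad (\<lambda>X. \<phi> X y) (0::real^'n, t) \<bullet> G" for y
  have F: "F y = y \<bullet> fst G + dirderiv \<Psi> dir_t (t, y)" if "norm y < \<epsilon>0" for y
    using grad_x_ti_phase[OF t that, of 0] snd_G0_ti_phase[of "(0, t)" y0] t y0
    by (simp add: F_def G_def inner_prod_def)
  have dF: "dd F p (axis j 1) = axis j 1 \<bullet> fst G + dirderiv (dirderiv \<Psi> dir_t) (dir_y j) (t, p)"
    if p: "norm p < \<epsilon>0" for p j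
  proof -
    have "dd F p (axis j 1) = (\<lambda>h. h \<bullet> fst G + fderiv (dirderiv \<Psi> dir_t) (t, p) (0, h)) (axis j 1)"
    proof (rule dd_eq_if_has_derivative_on_open[where S="ball 0 \<epsilon>0"])
      show "((\<lambda>y. y \<bullet> fst G + dirderiv \<Psi> dir_t (t, y)) has_derivative
          (\<lambda>h. h \<bullet> fst G + fderiv (dirderiv \<Psi> dir_t) (t, p) (0, h))) (at p)"
        using t p by (intro has_derivative_add has_derivative_slice_y[where S=S0] smooth_on_dirderiv smooth_psi)
          (auto intro!: derivative_eq_intros)
    qed (use F p in auto)
    then show ?thesis by (simp add: dirderiv_def dir_y_def)
  qed
  have "dd (\<lambda>p. dd F p (axis j 1)) y0 (axis i 1) = psi_tyy i j (t, y0)" for i j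
  proof -
    have "dd (\<lambda>p. dd F p (axis j 1)) y0 (axis i 1)
        = (\<lambda>h. fderiv (dirderiv (dirderiv \<Psi> dir_t) (dir_y j)) (t, y0) (0, h)) (axis i 1)"
    proof (rule dd_eq_if_has_derivative_on_open[where S="ball 0 \<epsilon>0"])
      show "((\<lambda>p. axis j 1 \<bullet> fst G + dirderiv (dirderiv \<Psi> dir_t) (dir_y j) (t, p)) has_derivative
          (\<lambda>h. fderiv (dirderiv (dirderiv \<Psi> dir_t) (dir_y j)) (t, y0) (0, h))) (at y0)"
        using has_derivative_add[OF has_derivative_const has_derivative_slice_y[OF
            smooth_on_dirderiv[OF smooth_on_dirderiv[OF smooth_psi]], of t y0]] t y0
        by simp
    qed (use dF y0 in auto)
    then show ?thesis by (simp add: dirderiv_def dir_y_def)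
  qed
  then have "hess F y0 = hess_t t y0" by (simp add: hess_def hess_t_def vec_eq_iff)
  moreover have "det (hess F y0) \<noteq> 0"
    using h2 t y0 eps unfolding H2_def dom_x_def F_def G_def by auto
  ultimately show ?thesis by simp
qed

lemma Gder_ti_phase:
  assumes R: "smooth_on S0 R" and w: "\<And>X. X \<in> dom_x \<epsilon>0 \<Longrightarrow> w X = R (snd X, y0)"
    and y0: "norm y0 < \<epsilon>0" and X: "X \<in> dom_x \<epsilon>0"
  shows "Gder \<phi> y0 w X = dirderiv R dir_t (snd X, y0)"
proof -
  have sX: "\<bar>snd X\<bar> < \<epsilon>0" using X by (auto simp: dom_x_def mem_Times_iff)
  have "Gder \<phi> y0 w X = (\<lambda>h. fderiv R (snd X, y0) (snd h, 0)) (G0 \<phi> X y0)"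
    unfolding Gder_def
    by (rule dd_eq_if_has_derivative_on_open[where S="dom_x \<epsilon>0" and g="\<lambda>X'. R (snd X', y0)"])
       (use w X sX y0 in \<open>auto simp: dom_x_def open_Times intro!: has_derivative_slice_snd[OF R]\<close>)
  then show ?thesis using snd_G0_ti_phase[OF sX y0] by (simp add: dirderiv_def dir_t_def)
qed

lemma dd_dd_ti_phase:
  assumes X: "X \<in> dom_x \<epsilon>0" and y0: "norm y0 < \<epsilon>0"
  shows "dd (\<lambda>y. dd (\<phi> X) y (axis j 1)) y0 (axis i 1) = psi_yy i j (snd X, y0)"
proof -
  have sX: "\<bar>snd X\<bar> < \<epsilon>0" using X by (auto simp: dom_x_def mem_Times_iff)
  have dy: "dd (\<phi> X) y (axis j 1) = fst X \<bullet> axis j 1 + dirderiv \<Psi> (dir_y j) (snd X, y)"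
    if y: "norm y < \<epsilon>0" for y
  proof -
    have "((\<lambda>y'. fst X \<bullet> y') has_derivative (\<lambda>h. fst X \<bullet> h)) (at y)"
      by (auto intro!: derivative_eq_intros)
    from has_derivative_add[OF this has_derivative_psi_y[OF sX y]]
    have "dd (\<phi> X) y (axis j 1) = fst X \<bullet> axis j 1 + fderiv \<Psi> (snd X, y) (0, axis j 1)"
      unfolding ti_phase_apply[abs_def] by (rule dd_eq_if_has_derivative)
    then show ?thesis by (simp add: dirderiv_def dir_y_def)
  qed
  have "dd (\<lambda>y. dd (\<phi> X) y (axis j 1)) y0 (axis i 1)
      = (\<lambda>h. fderiv (dirderiv \<Psi> (dir_y j)) (snd X, y0) (0, h)) (axis i 1)"
  proof (rule dd_eq_if_has_derivative_on_open[where S="ball 0 \<epsilon>0"])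
    show "((\<lambda>y. fst X \<bullet> axis j 1 + dirderiv \<Psi> (dir_y j) (snd X, y)) has_derivative
        (\<lambda>h. fderiv (dirderiv \<Psi> (dir_y j)) (snd X, y0) (0, h))) (at y0)"
      using has_derivative_add[OF has_derivative_const has_derivative_slice_y[OF
          smooth_on_dirderiv[OF smooth_psi], of "snd X" y0]] sX y0
      by simp
  qed (use dy y0 in auto)
  then show ?thesis by (simp add: dirderiv_def dir_y_def)
qed

lemma dirderiv_psi_yy_t:
  assumes z: "z \<in> S0"
  shows "dirderiv (psi_yy i j) dir_t z = psi_tyy i j z"
proof -
  have "dirderiv (dirderiv \<Psi> (dir_y j)) dir_t z' = dirderiv (dirderiv \<Psi> dir_t) (dir_y j) z'"
    if "z' \<in> S0" for z'
    using fderiv_fderiv_commute[OF smooth_on_imp_Ck_on[OF smooth_psi] that] by (simp add: dirderiv_def)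
  then have "fderiv (dirderiv (dirderiv \<Psi> (dir_y j)) dir_t) z = fderiv (dirderiv (dirderiv \<Psi> dir_t) (dir_y j)) z"
    by (intro fderiv_eq_on_open[OF open_S0 z] smooth_on_dirderiv smooth_psi)
  moreover have "dirderiv (psi_yy i j) dir_t z = fderiv (dirderiv (dirderiv \<Psi> (dir_y j)) dir_t) z (dir_y i)"
    using fderiv_fderiv_commute[OF smooth_on_imp_Ck_on[OF smooth_on_dirderiv[OF smooth_psi]] z]
    by (simp add: dirderiv_def)
  ultimately show ?thesis by (simp add: dirderiv_def)
qed

lemma psi_tyy_commute:
  assumes "z \<in> S0"
  shows "dirderiv (psi_tyy i j) (dir_y k) z = dirderiv (psi_tyy k j) (dir_y i) z"
  using fderiv_fderiv_commute[OF smooth_on_imp_Ck_on[OF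
      smooth_on_dirderiv[OF smooth_on_dirderiv[OF smooth_psi]]] assms]
  by (simp add: dirderiv_def)

lemma dirderiv_hess_t_proportional_if_bourgain:
  assumes b: "bourgain_at \<phi> X0 y0" and X0: "X0 \<in> dom_x \<epsilon>0" and y0: "norm y0 < \<epsilon>0"
  shows "\<exists>C. \<forall>i j. dirderiv (psi_tyy i j) dir_t (snd X0, y0) = C * psi_tyy i j (snd X0, y0)"
proof -
  have z: "(snd X0, y0) \<in> S0" using X0 y0 by (auto simp: dom_x_def mem_Times_iff)
  have g1: "Gder \<phi> y0 (\<lambda>X. dd (\<lambda>y. dd (\<phi> X) y (axis j 1)) y0 (axis i 1)) X
      = dirderiv (psi_yy i j) dir_t (snd X, y0)" if "X \<in> dom_x \<epsilon>0" for X i j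
    by (rule Gder_ti_phase[OF _ _ y0 that]) (auto simp: dd_dd_ti_phase y0 intro!: smooth_on_dirderiv smooth_psi)
  have g2: "Gder \<phi> y0 (Gder \<phi> y0 (\<lambda>X. dd (\<lambda>y. dd (\<phi> X) y (axis j 1)) y0 (axis i 1))) X0
      = dirderiv (dirderiv (psi_yy i j) dir_t) dir_t (snd X0, y0)" for i j
    by (rule Gder_ti_phase[OF _ _ y0 X0]) (auto simp: g1 intro!: smooth_on_dirderiv smooth_psi)
  have "dirderiv (dirderiv (psi_yy i j) dir_t) dir_t (snd X0, y0) = dirderiv (psi_tyy i j) dir_t (snd X0, y0)"
    for i j
  proof -
    have "fderiv (dirderiv (psi_yy i j) dir_t) (snd X0, y0) = fderiv (psi_tyy i j) (snd X0, y0)"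
      by (intro fderiv_eq_on_open[OF open_S0 z dirderiv_psi_yy_t] smooth_on_dirderiv smooth_psi)
    then show ?thesis by (simp only: dirderiv_def)
  qed
  with b g1[OF X0] g2 dirderiv_psi_yy_t[OF z] show ?thesis
    unfolding bourgain_at_def Let_def by (metis (no_types, lifting))
qed

lemma dirderiv_dir_y_zero_if_vanishes:
  assumes G: "smooth_on S0 G" and z: "\<And>y. norm y < \<epsilon>0 \<Longrightarrow> G (0, y) = 0" and y: "norm y < \<epsilon>0"
  shows "dirderiv G (dir_y j) (0, y) = 0"
proof -
  have "((\<lambda>y'. G (0, y')) has_derivative (\<lambda>h. fderiv G (0, y) (0, h))) (at y)"
    using has_derivative_slice_y[OF G] y eps by simp
  moreover have "((\<lambda>y'. G (0, y')) has_derivative (\<lambda>h. 0)) (at y)"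
    by (rule has_derivative_transform_within_open[where f="\<lambda>_. 0" and s="ball 0 \<epsilon>0"])
      (use y z in auto)
  ultimately have "(\<lambda>h. fderiv G (0, y) (0, h)) = (\<lambda>h. 0)" by (rule has_derivative_unique)
  then show ?thesis by (simp add: dirderiv_def dir_y_def fun_eq_iff)
qed

end

locale bourgain_phase = translation_invariant_phase \<psi> \<epsilon>0
  for \<psi> :: "real \<Rightarrow> real^'n::finite \<Rightarrow> real" and \<epsilon>0 +
  assumes dim: "CARD('n) \<ge> 2"
    and psi_0: "\<forall>y\<in>ball 0 \<epsilon>0. \<psi> 0 y = 0"
    and h2: "H2 \<phi> \<epsilon>0"
    and bourgain: "\<forall>X\<in>dom_x \<epsilon>0. \<forall>y0\<in>ball 0 \<epsilon>0. bourgain_at \<phi> X y0"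
begin

lemma psi_y_0: "norm y < \<epsilon>0 \<Longrightarrow> dirderiv \<Psi> (dir_y j) (0, y) = 0"
  by (rule dirderiv_dir_y_zero_if_vanishes[OF smooth_psi]) (use psi_0 in auto)

lemma psi_yy_0: "norm y < \<epsilon>0 \<Longrightarrow> psi_yy i j (0, y) = 0"
  by (rule dirderiv_dir_y_zero_if_vanishes) (auto intro: smooth_on_dirderiv smooth_psi psi_y_0)

lemma det_hess_t: "\<bar>t\<bar> < \<epsilon>0 \<Longrightarrow> norm y < \<epsilon>0 \<Longrightarrow> det (hess_t t y) \<noteq> 0"
  using det_hess_t_if_H2[OF h2] .

lemma hess_t_nonzero: "\<bar>t\<bar> < \<epsilon>0 \<Longrightarrow> norm y < \<epsilon>0 \<Longrightarrow> hess_t t y \<noteq> 0"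
proof
  assume "\<bar>t\<bar> < \<epsilon>0" "norm y < \<epsilon>0" "hess_t t y = 0"
  moreover have "det (0::real^'n^'n) = 0"
    by (rule det_zero_row(1)[of undefined]) (simp add: row_def vec_eq_iff)
  ultimately show False using det_hess_t by metis
qed

lemma has_derivative_hess_t_t:
  assumes t: "\<bar>t\<bar> < \<epsilon>0" and y: "norm y < \<epsilon>0"
  shows "\<exists>C. ((\<lambda>t. hess_t t y) has_derivative (\<lambda>h. h *\<^sub>R (C *\<^sub>R hess_t t y))) (at t)"
proof -
  have z: "(t, y) \<in> S0" using t y by simp
  obtain C where C: "\<And>i j. dirderiv (psi_tyy i j) dir_t (t, y) = C * psi_tyy i j (t, y)"
    using dirderiv_hess_t_proportional_if_bourgain[of "(0, t)" y] bourgain t y eps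
    by (auto simp: dom_x_def)
  have "((\<lambda>t. psi_tyy i j (t, y)) has_derivative (\<lambda>h. h * (C * psi_tyy i j (t, y)))) (at t)" for i j
    using has_derivative_slice_t[OF smooth_psi_tyy z] fderiv_t_eq_dir_t[OF smooth_psi_tyy z] C
    by simp
  then have "((\<lambda>t. hess_t t y) has_derivative (\<lambda>h. \<chi> i j. h * (C * psi_tyy i j (t, y)))) (at t)"
    unfolding hess_t_def by (rule has_derivative_matrix_lambda)
  moreover have "(\<lambda>h. \<chi> i j. h * (C * psi_tyy i j (t, y))) = (\<lambda>h. h *\<^sub>R (C *\<^sub>R hess_t t y))"
    by (simp add: fun_eq_iff vec_eq_iff hess_t_def)
  ultimately show ?thesis by auto
qed

definition hess_t_ratio :: "real \<Rightarrow> real^'n \<Rightarrow> real" where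
  "hess_t_ratio t y = norm (hess_t t y) / norm (hess_t 0 y)"

lemma hess_t_eq_ratio_scaleR:
  assumes t: "\<bar>t\<bar> < \<epsilon>0" and y: "norm y < \<epsilon>0"
  shows "hess_t t y = hess_t_ratio t y *\<^sub>R hess_t 0 y"
proof -
  obtain C where "\<forall>r\<in>ball 0 \<epsilon>0. ((\<lambda>t. hess_t t y) has_derivative (\<lambda>h. h *\<^sub>R (C r *\<^sub>R hess_t r y))) (at r)"
    using has_derivative_hess_t_t[OF _ y] by (metis mem_ball_0 real_norm_def)
  then show ?thesis
    unfolding hess_t_ratio_def
    using t y eps hess_t_nonzero[OF _ y]
    by (intro eq_norm_divide_scaleR_if_has_derivative_proportional[where I="ball 0 \<epsilon>0"]) auto
qed

lemma has_derivative_hess_t_y: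
  assumes "\<bar>t\<bar> < \<epsilon>0" "norm y < \<epsilon>0"
  shows "((\<lambda>y. hess_t t y) has_derivative (\<lambda>h. \<chi> i j. fderiv (psi_tyy i j) (t, y) (0, h))) (at y)"
  unfolding hess_t_def using assms
  by (intro has_derivative_matrix_lambda has_derivative_slice_y[where S=S0] smooth_on_dirderiv smooth_psi) auto

text \<open>Differentiate \<open>N\<^sub>i\<^sub>j(t,y) = r(y) N\<^sub>i\<^sub>j(0,y)\<close> in \<open>y\<^sub>k\<close>: by symmetry of third derivatives in
  \<open>i, k\<close>, \<open>\<partial>\<^sub>k r\<close> times row \<open>i\<close> of \<open>N(0,y)\<close> equals \<open>\<partial>\<^sub>i r\<close> times row \<open>k\<close>.\<close>
lemma hess_t_ratio_y_derivative_zero: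
  assumes t: "\<bar>t\<bar> < \<epsilon>0" and y: "norm y < \<epsilon>0"
    and r: "\<And>y. norm y < \<epsilon>0 \<Longrightarrow> r y = hess_t_ratio t y" and dr: "(r has_derivative r') (at y)"
  shows "r' = (\<lambda>h. 0)"
proof -
  have zt: "(t, y) \<in> S0" and z0: "(0, y) \<in> S0" using t y eps by auto
  have diff_y: "dirderiv (psi_tyy i j) (dir_y k) (t, y)
      = r y * dirderiv (psi_tyy i j) (dir_y k) (0, y) + r' (axis k 1) * psi_tyy i j (0, y)" for i j k
  proof -
    have "((\<lambda>y'. psi_tyy i j (t, y')) has_derivative (\<lambda>h. fderiv (psi_tyy i j) (t, y) (0, h))) (at y)"
      using zt by (intro has_derivative_slice_y[where S=S0] smooth_on_dirderiv smooth_psi)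
    moreover have "((\<lambda>y'. psi_tyy i j (t, y')) has_derivative
        (\<lambda>h. r y * fderiv (psi_tyy i j) (0, y) (0, h) + r' h * psi_tyy i j (0, y))) (at y)"
    proof (rule has_derivative_transform_within_open[where s="ball 0 \<epsilon>0"])
      show "((\<lambda>y'. r y' * psi_tyy i j (0, y')) has_derivative
          (\<lambda>h. r y * fderiv (psi_tyy i j) (0, y) (0, h) + r' h * psi_tyy i j (0, y))) (at y)"
        using z0 by (intro has_derivative_mult dr has_derivative_slice_y[where S=S0] smooth_on_dirderiv smooth_psi)
      show "r y' * psi_tyy i j (0, y') = psi_tyy i j (t, y')" if "y' \<in> ball 0 \<epsilon>0" for y'
        using hess_t_eq_ratio_scaleR[OF t, of y'] r[of y'] that by (simp add: hess_t_def vec_eq_iff)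
    qed (use y in auto)
    ultimately have "(\<lambda>h. fderiv (psi_tyy i j) (t, y) (0, h))
        = (\<lambda>h. r y * fderiv (psi_tyy i j) (0, y) (0, h) + r' h * psi_tyy i j (0, y))"
      by (rule has_derivative_unique)
    from fun_cong[OF this, of "axis k 1"] show ?thesis by (simp add: dirderiv_def dir_y_def)
  qed
  have r'_axis: "r' (axis k 1) = 0" for k
  proof (rule zero_if_rows_cross_proportional[OF dim det_hess_t[of 0 y]])
    show "r' (axis k 1) * hess_t 0 y $ i $ j = r' (axis i 1) * hess_t 0 y $ k $ j" for i j k
      using diff_y[where i=i and j=j and k=k] diff_y[where i=k and j=j and k=i]
        psi_tyy_commute[OF zt, where i=i and j=j and k=k] psi_tyy_commute[OF z0, where i=i and j=j and k=k]
      by (simp add: hess_t_def)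
  qed (use y eps in auto)
  have lin: "linear r'" using has_derivative_linear[OF dr] .
  show ?thesis
  proof
    fix h :: "real^'n"
    have "r' h = r' (\<Sum>i\<in>UNIV. h $ i *\<^sub>R axis i 1)"
      using basis_expansion[of h] by (simp add: scalar_mult_eq_scaleR)
    also have "\<dots> = 0" by (simp add: linear_sum[OF lin] linear_scale[OF lin] r'_axis)
    finally show "r' h = 0" .
  qed
qed

lemma hess_t_ratio_indep_y:
  assumes t: "\<bar>t\<bar> < \<epsilon>0" and y: "norm y < \<epsilon>0"
  shows "hess_t_ratio t y = hess_t_ratio t 0"
proof -
  define r where "r y = (hess_t t y \<bullet> hess_t 0 y) / (hess_t 0 y \<bullet> hess_t 0 y)" for y
  have r: "r y = hess_t_ratio t y" if "norm y < \<epsilon>0" for y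
    using hess_t_eq_ratio_scaleR[OF t that] hess_t_nonzero[of 0 y] that eps by (simp add: r_def)
  have "(r has_derivative (\<lambda>h. 0)) (at y)" if "y \<in> ball 0 \<epsilon>0" for y
  proof -
    have "(\<lambda>y. hess_t t y) differentiable (at y)" "(\<lambda>y. hess_t 0 y) differentiable (at y)"
      using has_derivative_hess_t_y[OF t, of y] has_derivative_hess_t_y[of 0 y] that eps
      by (auto intro: differentiableI)
    moreover have "hess_t 0 y \<bullet> hess_t 0 y \<noteq> 0" using hess_t_nonzero[of 0 y] that eps by simp
    ultimately have "r differentiable (at y)" unfolding r_def[abs_def] by simp
    then have dr: "(r has_derivative fderiv r y) (at y)" by (simp add: frechet_derivative_works)
    have "fderiv r y = (\<lambda>h. 0)"
      by (rule hess_t_ratio_y_derivative_zero[OF t _ r dr]) (use that in simp)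
    with dr show ?thesis by simp
  qed
  then have "r y = r 0"
    by (rule has_derivative_zero_unique_connected[where s="ball 0 \<epsilon>0", OF open_ball connected_ball]) (use y eps in auto)
  then show ?thesis using r[OF y] r[of 0] eps by simp
qed

definition \<alpha> :: "real \<Rightarrow> real" where
  "\<alpha> t = hess_t_ratio t 0"

lemma psi_tyy_eq_\<alpha>:
  assumes "\<bar>t\<bar> < \<epsilon>0" "norm y < \<epsilon>0"
  shows "psi_tyy i j (t, y) = \<alpha> t * psi_tyy i j (0, y)"
  using hess_t_eq_ratio_scaleR[OF assms] hess_t_ratio_indep_y[OF assms]
  by (simp add: \<alpha>_def hess_t_def vec_eq_iff)

lemma \<alpha>_pos: "\<bar>t\<bar> < \<epsilon>0 \<Longrightarrow> \<alpha> t > 0"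
  using hess_t_nonzero[of t 0] hess_t_nonzero[of 0 0] eps by (simp add: \<alpha>_def hess_t_ratio_def)

lemma has_real_derivative_psi_yy_t:
  assumes s: "\<bar>s\<bar> < \<epsilon>0" and y: "norm y < \<epsilon>0"
  shows "((\<lambda>s. psi_yy i j (s, y)) has_real_derivative \<alpha> s * psi_tyy i j (0, y)) (at s)"
proof -
  have z: "(s, y) \<in> S0" using s y by simp
  have "(\<lambda>h. fderiv (psi_yy i j) (s, y) (h, 0)) = (*) (\<alpha> s * psi_tyy i j (0, y))"
    using fderiv_t_eq_dir_t[OF smooth_psi_yy[where i=i and j=j] z] dirderiv_psi_yy_t[OF z] psi_tyy_eq_\<alpha>[OF s y]
    by (simp add: fun_eq_iff)
  then show ?thesis
    using has_derivative_slice_t[OF smooth_psi_yy[where i=i and j=j] z] by (simp only: has_field_derivative_def)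
qed

text \<open>Any entry with \<open>N\<^sub>p\<^sub>q(0,0) \<noteq> 0\<close> normalises \<open>A(t) = \<partial>\<^sub>p\<partial>\<^sub>q\<psi>(t,0) / N\<^sub>p\<^sub>q(0,0)\<close>,
  a primitive of \<open>\<alpha>\<close>.\<close>
definition pivot :: "'n \<times> 'n" where
  "pivot = (SOME p. psi_tyy (fst p) (snd p) (0, 0) \<noteq> 0)"

lemma psi_tyy_pivot: "psi_tyy (fst pivot) (snd pivot) (0, 0) \<noteq> 0"
proof -
  have "hess_t 0 0 \<noteq> 0" using hess_t_nonzero[of 0 0] eps by simp
  then obtain i j where "psi_tyy i j (0, 0) \<noteq> 0" by (auto simp: hess_t_def vec_eq_iff)
  then have "\<exists>p. psi_tyy (fst p) (snd p) (0, 0) \<noteq> 0" by (intro exI[of _ "(i, j)"]) simp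
  then show ?thesis unfolding pivot_def by (rule someI_ex)
qed

definition A :: "real \<Rightarrow> real" where
  "A t = psi_yy (fst pivot) (snd pivot) (t, 0) / psi_tyy (fst pivot) (snd pivot) (0, 0)"

lemma has_real_derivative_A: "\<bar>t\<bar> < \<epsilon>0 \<Longrightarrow> (A has_real_derivative \<alpha> t) (at t)"
  unfolding A_def[abs_def] using psi_tyy_pivot eps
  by (auto intro!: derivative_eq_intros has_real_derivative_psi_yy_t)

lemma A_0: "A 0 = 0"
  using psi_yy_0[of 0] eps by (simp add: A_def)

lemma psi_yy_eq_A:
  assumes t: "\<bar>t\<bar> < \<epsilon>0" and y: "norm y < \<epsilon>0"
  shows "psi_yy i j (t, y) = A t * psi_tyy i j (0, y)"
proof -
  define Z where "Z s = psi_yy i j (s, y) - A s * psi_tyy i j (0, y)" for s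
  have "(Z has_derivative (\<lambda>h. 0)) (at s)" if "s \<in> ball 0 \<epsilon>0" for s
  proof -
    have "(Z has_real_derivative \<alpha> s * psi_tyy i j (0, y) - \<alpha> s * psi_tyy i j (0, y)) (at s)"
      unfolding Z_def[abs_def] using that y
      by (auto intro!: derivative_eq_intros has_real_derivative_psi_yy_t has_real_derivative_A)
    moreover have "(*) (0::real) = (\<lambda>h. 0)" by auto
    ultimately show ?thesis by (simp add: has_field_derivative_def)
  qed
  then have "Z t = Z 0"
    by (rule has_derivative_zero_unique_connected[where s="ball 0 \<epsilon>0", OF open_ball connected_ball]) (use t eps in auto)
  then show ?thesis using psi_yy_0[OF y] A_0 by (simp add: Z_def)
qed

definition h0 :: "real^'n \<Rightarrow> real" where
  "h0 y = dirderiv \<Psi> dir_t (0, y)"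

definition L :: "real \<Rightarrow> real^'n" where
  "L t = (\<chi> j. dirderiv \<Psi> (dir_y j) (t, 0) - A t * dirderiv (dirderiv \<Psi> dir_t) (dir_y j) (0, 0))"

definition c0 :: "real \<Rightarrow> real" where
  "c0 t = \<psi> t 0 - A t * h0 0"

lemma psi_y_eq_A_plus_L:
  assumes t: "\<bar>t\<bar> < \<epsilon>0" and y: "norm y < \<epsilon>0"
  shows "dirderiv \<Psi> (dir_y j) (t, y) = A t * dirderiv (dirderiv \<Psi> dir_t) (dir_y j) (0, y) + L t $ j"
proof -
  define d where "d y = dirderiv \<Psi> (dir_y j) (t, y) - A t * dirderiv (dirderiv \<Psi> dir_t) (dir_y j) (0, y)"
    for y
  have "(d has_derivative (\<lambda>h. 0)) (at y')" if y': "y' \<in> ball 0 \<epsilon>0" for y'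
  proof -
    have zt: "(t, y') \<in> S0" and z0: "(0, y') \<in> S0" using t y' eps by auto
    have "(d has_derivative (\<lambda>h. fderiv (dirderiv \<Psi> (dir_y j)) (t, y') (0, h)
        - A t * fderiv (dirderiv (dirderiv \<Psi> dir_t) (dir_y j)) (0, y') (0, h))) (at y')"
      unfolding d_def[abs_def] using zt z0
      by (intro has_derivative_diff has_derivative_mult_right has_derivative_slice_y[where S=S0]
          smooth_on_dirderiv smooth_psi)
    moreover have "fderiv (dirderiv \<Psi> (dir_y j)) (t, y') (0, h)
        = A t * fderiv (dirderiv (dirderiv \<Psi> dir_t) (dir_y j)) (0, y') (0, h)" for h
      using fderiv_y_eq_sum_dir_y[OF smooth_on_dirderiv[OF smooth_psi, of "dir_y j"] zt]
        fderiv_y_eq_sum_dir_y[OF smooth_on_dirderiv[OF smooth_on_dirderiv[OF smooth_psi, of dir_t],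
          of "dir_y j"] z0]
        psi_yy_eq_A[OF t, of y'] y'
      by (simp add: sum_distrib_left algebra_simps)
    ultimately show ?thesis by simp
  qed
  then have "d y = d 0"
    by (rule has_derivative_zero_unique_connected[where s="ball 0 \<epsilon>0", OF open_ball connected_ball]) (use y eps in auto)
  then show ?thesis by (simp add: d_def L_def)
qed

lemma psi_eq_A_h0_L_c0:
  assumes t: "\<bar>t\<bar> < \<epsilon>0" and y: "norm y < \<epsilon>0"
  shows "\<psi> t y = A t * h0 y + L t \<bullet> y + c0 t"
proof -
  define G where "G y = \<psi> t y - A t * h0 y - L t \<bullet> y" for y
  have "(G has_derivative (\<lambda>h. 0)) (at y')" if y': "y' \<in> ball 0 \<epsilon>0" for y'
  proof -
    have zt: "(t, y') \<in> S0" and z0: "(0, y') \<in> S0" using t y' eps by auto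
    have "(G has_derivative (\<lambda>h. fderiv \<Psi> (t, y') (0, h) - A t * fderiv (dirderiv \<Psi> dir_t) (0, y') (0, h)
        - L t \<bullet> h)) (at y')"
      unfolding G_def[abs_def] h0_def using zt z0 has_derivative_psi_y[of t y'] t y'
      by (intro has_derivative_diff has_derivative_mult_right has_derivative_slice_y[where S=S0]
          smooth_on_dirderiv smooth_psi) (auto intro!: derivative_eq_intros)
    moreover have "fderiv \<Psi> (t, y') (0, h) - A t * fderiv (dirderiv \<Psi> dir_t) (0, y') (0, h) = L t \<bullet> h" for h
      using fderiv_y_eq_sum_dir_y[OF smooth_psi zt]
        fderiv_y_eq_sum_dir_y[OF smooth_on_dirderiv[OF smooth_psi, of dir_t] z0]
        psi_y_eq_A_plus_L[OF t, of y'] y'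
      by (simp add: inner_vec_def sum_distrib_left algebra_simps sum.distrib)
    ultimately show ?thesis by simp
  qed
  then have "G y = G 0"
    by (rule has_derivative_zero_unique_connected[where s="ball 0 \<epsilon>0", OF open_ball connected_ball]) (use y eps in auto)
  then show ?thesis by (simp add: G_def c0_def)
qed

lemma smooth_on_slice_t0: "smooth_on S0 G \<Longrightarrow> smooth_on (ball 0 \<epsilon>0) (\<lambda>t. G (t, 0))"
  by (erule smooth_on_compose[where f="\<lambda>t. (t, 0)"])
    (use eps in \<open>auto intro!: smooth_on_Pair smooth_on_id smooth_on_const\<close>)

lemma smooth_on_slice_0y: "smooth_on S0 G \<Longrightarrow> smooth_on (ball 0 \<epsilon>0) (\<lambda>y. G (0, y))"
  by (erule smooth_on_compose[where f="\<lambda>y. (0, y)"])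
    (use eps in \<open>auto intro!: smooth_on_Pair smooth_on_id smooth_on_const\<close>)

lemma smooth_A: "smooth_on (ball 0 \<epsilon>0) A"
proof -
  have "smooth_on (ball 0 \<epsilon>0)
      (\<lambda>t. psi_yy (fst pivot) (snd pivot) (t, 0) * inverse (psi_tyy (fst pivot) (snd pivot) (0, 0)))"
    by (intro smooth_on_mult smooth_on_const smooth_on_slice_t0 smooth_psi_yy) simp
  then show ?thesis by (rule smooth_on_cong) (simp add: A_def divide_inverse)
qed

lemma smooth_L: "smooth_on (ball 0 \<epsilon>0) L"
  unfolding L_def[abs_def]
  by (intro smooth_on_vec_lambda smooth_on_diff smooth_on_mult smooth_A smooth_on_const
      smooth_on_slice_t0 smooth_on_dirderiv smooth_psi) simp_all

lemma smooth_h0: "smooth_on (ball 0 \<epsilon>0) h0"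
  unfolding h0_def[abs_def] by (intro smooth_on_slice_0y smooth_on_dirderiv smooth_psi)

lemma smooth_c0: "smooth_on (ball 0 \<epsilon>0) c0"
proof -
  have "smooth_on (ball 0 \<epsilon>0) (\<lambda>t. \<Psi> (t, 0) - A t * h0 0)"
    by (intro smooth_on_diff smooth_on_mult smooth_A smooth_on_const smooth_on_slice_t0 smooth_psi) simp
  then show ?thesis by (rule smooth_on_cong) (simp add: c0_def)
qed

lemma A_strict_mono:
  assumes a: "a \<in> ball 0 \<epsilon>0" and b: "b \<in> ball 0 \<epsilon>0" and ab: "a < b"
  shows "A a < A b"
proof (rule DERIV_pos_imp_increasing[OF ab])
  fix x assume "a \<le> x" "x \<le> b"
  then have x: "\<bar>x\<bar> < \<epsilon>0" using a b by auto
  show "\<exists>y. DERIV A x :> y \<and> 0 < y" using has_real_derivative_A[OF x] \<alpha>_pos[OF x] by blast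
qed

lemma inj_on_A: "inj_on A (ball 0 \<epsilon>0)"
proof (rule linorder_inj_onI)
  fix x y :: real assume "x < y" "x \<in> ball 0 \<epsilon>0" "y \<in> ball 0 \<epsilon>0"
  then show "A x \<noteq> A y" using A_strict_mono by (metis less_irrefl)
qed auto

definition \<tau> :: "real \<Rightarrow> real" where
  "\<tau> = the_inv_into (ball 0 \<epsilon>0) A"

lemma \<tau>_A: "t \<in> ball 0 \<epsilon>0 \<Longrightarrow> \<tau> (A t) = t"
  unfolding \<tau>_def using inj_on_A the_inv_into_f_f by metis

lemma A_\<tau>: "s \<in> A ` ball 0 \<epsilon>0 \<Longrightarrow> \<tau> s \<in> ball 0 \<epsilon>0 \<and> A (\<tau> s) = s"
  unfolding \<tau>_def using inj_on_A the_inv_into_into f_the_inv_into_f by (metis order_refl)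

lemma open_image_A: "open V \<Longrightarrow> V \<subseteq> ball 0 \<epsilon>0 \<Longrightarrow> open (A ` V)"
  using has_real_derivative_A \<alpha>_pos
  by (intro open_image_if_has_real_derivative_nonzero[where D=\<alpha>]) (force simp: subset_iff)+

lemma smooth_\<tau>: "smooth_on (A ` ball 0 \<epsilon>0) \<tau>"
proof (rule smooth_on_inverse_function_real[OF open_image_A smooth_A])
  show "fderiv A t 1 \<noteq> 0" if "t \<in> ball 0 \<epsilon>0" for t
  proof -
    have "fderiv A t = (*) (\<alpha> t)"
      using that has_real_derivative_A[of t] frechet_derivative_at[of A "(*) (\<alpha> t)" t]
      by (simp add: has_field_derivative_def)
    then show ?thesis using that \<alpha>_pos[of t] by simp
  qed
  show "continuous_on (A ` ball 0 \<epsilon>0) \<tau>"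
  proof (rule continuous_on_inverse_open_map)
    show "continuous_on (ball 0 \<epsilon>0) A"
      using has_real_derivative_A by (auto intro!: continuous_at_imp_continuous_on DERIV_isCont)
    show "openin (top_of_set (A ` ball 0 \<epsilon>0)) (A ` V)" if "openin (top_of_set (ball 0 \<epsilon>0)) V" for V
      using that open_image_A openin_open_eq[of "ball 0 \<epsilon>0"] openin_open_eq[OF open_image_A]
      by (metis image_mono open_ball order_refl)
  qed (use \<tau>_A in auto)
qed (use A_\<tau> in auto)

subsection \<open>Straightening the Kakeya curves\<close>

definition U :: "((real^'n) \<times> real) set" where
  "U = {z. snd z \<in> A ` ball 0 \<epsilon>0 \<and> fst z - L (\<tau> (snd z)) \<in> ball 0 \<epsilon>0}"

definition \<kappa> :: "(real^'n) \<times> real \<Rightarrow> (real^'n) \<times> real" where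
  "\<kappa> z = (fst z - L (\<tau> (snd z)), \<tau> (snd z))"

definition \<Phi> :: "(real^'n) \<times> real \<Rightarrow> (real^'n) \<times> real" where
  "\<Phi> X = (fst X + L (snd X), A (snd X))"

definition f0 :: "real \<Rightarrow> real" where
  "f0 s = c0 (\<tau> s)"

lemma smooth_\<kappa>_on_strip: "smooth_on (UNIV \<times> A ` ball 0 \<epsilon>0) \<kappa>"
proof -
  have W: "open (UNIV \<times> A ` ball 0 \<epsilon>0 :: ((real^'n) \<times> real) set)"
    by (simp add: open_Times open_image_A)
  have "smooth_on (UNIV \<times> A ` ball 0 \<epsilon>0) (\<lambda>z::(real^'n) \<times> real. \<tau> (snd z))"
    by (rule smooth_on_compose[OF smooth_\<tau> smooth_on_snd[OF W]]) auto
  moreover from this have "smooth_on (UNIV \<times> A ` ball 0 \<epsilon>0) (\<lambda>z::(real^'n) \<times> real. L (\<tau> (snd z)))"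
    by (rule smooth_on_compose[OF smooth_L]) (use A_\<tau> in auto)
  ultimately show ?thesis
    unfolding \<kappa>_def[abs_def] by (intro smooth_on_Pair smooth_on_diff smooth_on_fst W)
qed

lemma open_U: "open U"
proof -
  have "continuous_on (UNIV \<times> A ` ball 0 \<epsilon>0) (\<lambda>z. fst (\<kappa> z))"
    using smooth_on_continuous_on[OF smooth_\<kappa>_on_strip] by (intro continuous_intros)
  then have "open ((UNIV \<times> A ` ball 0 \<epsilon>0) \<inter> (\<lambda>z. fst (\<kappa> z)) -` ball 0 \<epsilon>0)"
    by (rule continuous_open_preimage) (simp_all add: open_Times open_image_A)
  moreover have "(UNIV \<times> A ` ball 0 \<epsilon>0) \<inter> (\<lambda>z. fst (\<kappa> z)) -` ball 0 \<epsilon>0 = U"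
    by (auto simp: U_def \<kappa>_def)
  ultimately show ?thesis by simp
qed

lemma \<kappa>_in_dom_x: "z \<in> U \<Longrightarrow> \<kappa> z \<in> dom_x \<epsilon>0"
  using A_\<tau> by (auto simp: U_def \<kappa>_def dom_x_def)

lemma \<Phi>_in_U: "X \<in> dom_x \<epsilon>0 \<Longrightarrow> \<Phi> X \<in> U \<and> \<kappa> (\<Phi> X) = X"
  by (auto simp: U_def \<Phi>_def \<kappa>_def dom_x_def mem_Times_iff \<tau>_A)

lemma image_\<kappa>: "\<kappa> ` U = dom_x \<epsilon>0"
proof
  show "dom_x \<epsilon>0 \<subseteq> \<kappa> ` U"
  proof
    fix X :: "(real^'n) \<times> real" assume "X \<in> dom_x \<epsilon>0"
    then have "\<Phi> X \<in> U" "X = \<kappa> (\<Phi> X)" using \<Phi>_in_U by auto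
    then show "X \<in> \<kappa> ` U" by (rule rev_image_eqI)
  qed
qed (use \<kappa>_in_dom_x in blast)

lemma inj_on_\<kappa>: "inj_on \<kappa> U"
proof
  fix z1 z2 assume z: "z1 \<in> U" "z2 \<in> U" "\<kappa> z1 = \<kappa> z2"
  then have "A (\<tau> (snd z1)) = A (\<tau> (snd z2))" by (simp add: \<kappa>_def)
  then have "snd z1 = snd z2" using z(1,2) A_\<tau> by (auto simp: U_def)
  then show "z1 = z2" using z(3) by (simp add: \<kappa>_def prod_eq_iff)
qed

lemma diffeo_on_\<kappa>: "diffeo_on U \<kappa>"
  unfolding diffeo_on_def
proof (intro conjI)
  show "smooth_on U \<kappa>"
    by (rule smooth_on_subset[OF smooth_\<kappa>_on_strip open_U]) (auto simp: U_def)
  have "smooth_on (dom_x \<epsilon>0) \<Phi>"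
    unfolding \<Phi>_def[abs_def] dom_x_def
    by (intro smooth_on_Pair smooth_on_add smooth_on_fst open_Times open_ball
        smooth_on_compose[OF smooth_L smooth_on_snd] smooth_on_compose[OF smooth_A smooth_on_snd]) auto
  then show "smooth_on (\<kappa> ` U) (the_inv_into U \<kappa>)"
    unfolding image_\<kappa> by (rule smooth_on_cong) (use the_inv_into_f_eq[OF inj_on_\<kappa>] \<Phi>_in_U in metis)
qed (use open_U inj_on_\<kappa> image_\<kappa> in \<open>auto simp: dom_x_def open_Times\<close>)

lemma zero_in_U: "0 \<in> U"
proof -
  have "\<tau> 0 = 0" using \<tau>_A[of 0] A_0 eps by simp
  moreover have "L 0 = 0" using psi_y_0[of 0] eps by (simp add: L_def A_0 vec_eq_iff)
  moreover have "0 \<in> A ` ball 0 \<epsilon>0" using A_0 eps by (metis centre_in_ball image_eqI)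
  ultimately show ?thesis using eps by (simp add: U_def)
qed

lemma snd_image_U: "snd ` U = A ` ball 0 \<epsilon>0"
proof
  show "A ` ball 0 \<epsilon>0 \<subseteq> snd ` U"
  proof
    fix s assume "s \<in> A ` ball 0 \<epsilon>0"
    then have "(L (\<tau> s), s) \<in> U" using eps by (simp add: U_def)
    then show "s \<in> snd ` U" by (metis image_eqI snd_conv)
  qed
qed (auto simp: U_def)

lemma smooth_f0: "smooth_on (snd ` U) f0"
  unfolding snd_image_U f0_def[abs_def]
  by (rule smooth_on_compose[OF smooth_c0 smooth_\<tau>]) (use A_\<tau> in auto)

lemma ti_phase_\<kappa>:
  assumes z: "z \<in> U" and y: "norm y < \<epsilon>0"
  shows "\<phi> (\<kappa> z) y = fst z \<bullet> y + snd z * h0 y + 0 + f0 (snd z)"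
proof -
  have t: "\<bar>\<tau> (snd z)\<bar> < \<epsilon>0" and "A (\<tau> (snd z)) = snd z" using A_\<tau> z by (auto simp: U_def)
  then show ?thesis
    using psi_eq_A_h0_L_c0[OF t y] by (simp add: ti_phase_apply \<kappa>_def f0_def inner_diff_left)
qed

lemma has_derivative_h0:
  "norm y < \<epsilon>0 \<Longrightarrow> (h0 has_derivative (\<lambda>h. fderiv (dirderiv \<Psi> dir_t) (0, y) (0, h))) (at y)"
  unfolding h0_def[abs_def] using eps
  by (intro has_derivative_slice_y[where S=S0] smooth_on_dirderiv smooth_psi) auto

lemma grad_h0: "norm y < \<epsilon>0 \<Longrightarrow> grad h0 y = (\<chi> i. dirderiv (dirderiv \<Psi> dir_t) (dir_y i) (0, y))"
  using grad_eq_if_has_derivative[OF has_derivative_h0] by (simp add: dirderiv_def dir_y_def)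

lemma hess_h0:
  assumes y: "norm y < \<epsilon>0"
  shows "hess h0 y = hess_t 0 y"
proof -
  have "dd (\<lambda>p. dd h0 p (axis j 1)) y (axis i 1) = psi_tyy i j (0, y)" for i j
  proof -
    have "dd (\<lambda>p. dd h0 p (axis j 1)) y (axis i 1)
        = (\<lambda>h. fderiv (dirderiv (dirderiv \<Psi> dir_t) (dir_y j)) (0, y) (0, h)) (axis i 1)"
    proof (rule dd_eq_if_has_derivative_on_open[where S="ball 0 \<epsilon>0"])
      show "dd h0 p (axis j 1) = dirderiv (dirderiv \<Psi> dir_t) (dir_y j) (0, p)" if "p \<in> ball 0 \<epsilon>0" for p
        using dd_eq_if_has_derivative[OF has_derivative_h0] that by (simp add: dirderiv_def dir_y_def)
      show "((\<lambda>p. dirderiv (dirderiv \<Psi> dir_t) (dir_y j) (0, p)) has_derivative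
          (\<lambda>h. fderiv (dirderiv (dirderiv \<Psi> dir_t) (dir_y j)) (0, y) (0, h))) (at y)"
        using y eps by (intro has_derivative_slice_y[where S=S0] smooth_on_dirderiv smooth_psi) auto
    qed (use y in auto)
    then show ?thesis by (simp add: dirderiv_def dir_y_def)
  qed
  then show ?thesis by (simp add: hess_def hess_t_def vec_eq_iff)
qed

lemma grad_ti_phase_\<kappa>:
  assumes z: "z \<in> U" and y: "norm y < \<epsilon>0"
  shows "grad (\<phi> (\<kappa> z)) y = fst z + snd z *\<^sub>R grad h0 y"
proof -
  have "((\<lambda>y'. fst z \<bullet> y' + snd z * h0 y' + 0 + f0 (snd z)) has_derivative
      (\<lambda>h. fst z \<bullet> h + snd z * fderiv (dirderiv \<Psi> dir_t) (0, y) (0, h) + 0 + 0)) (at y)"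
    by (intro has_derivative_add has_derivative_mult_right has_derivative_const has_derivative_h0 y)
       (auto intro!: derivative_eq_intros)
  then have "(\<phi> (\<kappa> z) has_derivative
      (\<lambda>h. fst z \<bullet> h + snd z * fderiv (dirderiv \<Psi> dir_t) (0, y) (0, h) + 0 + 0)) (at y)"
    by (rule has_derivative_transform_within_open[where s="ball 0 \<epsilon>0"])
      (use y ti_phase_\<kappa>[OF z] in auto)
  then show ?thesis
    using grad_h0[OF y] by (simp add: grad_eq_if_has_derivative vec_eq_iff inner_axis dirderiv_def dir_y_def)
qed

lemma grad_ti_phase_base:
  assumes w: "norm \<omega> < \<epsilon>0" and y: "norm y < \<epsilon>0"
  shows "grad (\<phi> (\<omega>, 0)) y = \<omega>"
proof -
  have "((\<lambda>y'. \<omega> \<bullet> y') has_derivative (\<lambda>h. \<omega> \<bullet> h)) (at y)"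
    by (auto intro!: derivative_eq_intros)
  then have "(\<phi> (\<omega>, 0) has_derivative (\<lambda>h. \<omega> \<bullet> h)) (at y)"
    by (rule has_derivative_transform_within_open[where s="ball 0 \<epsilon>0"])
      (use y psi_0 in \<open>auto simp: ti_phase_apply\<close>)
  then show ?thesis by (simp add: grad_eq_if_has_derivative vec_eq_iff inner_axis)
qed

lemma on_line_iff:
  fixes g p :: "'a::real_vector"
  shows "fst z + snd z *\<^sub>R g = p \<longleftrightarrow> (\<exists>s. z = (p, 0) + s *\<^sub>R (- g, 1))"
proof
  assume "fst z + snd z *\<^sub>R g = p"
  then have "z = (p, 0) + snd z *\<^sub>R (- g, 1)" by (auto simp: prod_eq_iff algebra_simps)
  then show "\<exists>s. z = (p, 0) + s *\<^sub>R (- g, 1)" ..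
qed auto

lemma kakeya_curves_to_lines:
  assumes y: "norm y < \<epsilon>0" and z: "z \<in> U"
  shows "{z' \<in> U. grad (\<phi> (\<kappa> z')) y = grad (\<phi> (\<kappa> z)) y} = U \<inter> {z + s *\<^sub>R (- grad h0 y, 1) | s. True}"
proof -
  define p where "p = fst z + snd z *\<^sub>R grad h0 y"
  obtain s0 where s0: "z = (p, 0) + s0 *\<^sub>R (- grad h0 y, 1)" using on_line_iff p_def by metis
  have line: "(\<exists>s. z' = (p, 0) + s *\<^sub>R (- grad h0 y, 1)) \<longleftrightarrow> (\<exists>s. z' = z + s *\<^sub>R (- grad h0 y, 1))"
    for z'
  proof
    assume "\<exists>s. z' = (p, 0) + s *\<^sub>R (- grad h0 y, 1)"
    then obtain s where "z' = (p, 0) + s *\<^sub>R (- grad h0 y, 1)" ..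
    then have "z' = z + (s - s0) *\<^sub>R (- grad h0 y, 1)" by (simp add: s0 algebra_simps)
    then show "\<exists>s. z' = z + s *\<^sub>R (- grad h0 y, 1)" ..
  next
    assume "\<exists>s. z' = z + s *\<^sub>R (- grad h0 y, 1)"
    then obtain s where "z' = z + s *\<^sub>R (- grad h0 y, 1)" ..
    then have "z' = (p, 0) + (s0 + s) *\<^sub>R (- grad h0 y, 1)" by (simp add: s0 algebra_simps)
    then show "\<exists>s. z' = (p, 0) + s *\<^sub>R (- grad h0 y, 1)" ..
  qed
  have "grad (\<phi> (\<kappa> z')) y = grad (\<phi> (\<kappa> z)) y \<longleftrightarrow> (\<exists>s. z' = z + s *\<^sub>R (- grad h0 y, 1))"
    if "z' \<in> U" for z'
    using grad_ti_phase_\<kappa>[OF that y] grad_ti_phase_\<kappa>[OF z y] on_line_iff[of z' "grad h0 y" p] line[of z']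
    by (simp add: p_def)
  then show ?thesis by blast
qed

lemma open_image_grad_h0: "open ((\<lambda>y. - grad h0 y) ` ball 0 \<epsilon>0)"
proof -
  define F where "F y = - (\<chi> i. dirderiv (dirderiv \<Psi> dir_t) (dir_y i) (0, y))" for y
  have img: "(\<lambda>y. - grad h0 y) ` ball 0 \<epsilon>0 = F ` ball 0 \<epsilon>0"
    by (rule image_cong[OF refl]) (simp add: F_def grad_h0)
  have "smooth_on (ball 0 \<epsilon>0) F"
    unfolding F_def[abs_def]
    by (intro smooth_on_linear[OF bounded_linear_minus[OF bounded_linear_ident]] smooth_on_vec_lambda
        smooth_on_slice_0y smooth_on_dirderiv smooth_psi) simp
  show ?thesis unfolding img
  proof (rule open_image_if_has_derivative_right_inverse[OF _ smooth_on_continuous_on[OF \<open>smooth_on _ F\<close>]])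
    fix y :: "real^'n" assume "y \<in> ball 0 \<epsilon>0"
    then have y: "norm y < \<epsilon>0" and z: "(0, y) \<in> S0" using eps by auto
    define M where "M = transpose (hess_t 0 y)"
    have "((\<lambda>y. \<chi> i. dirderiv (dirderiv \<Psi> dir_t) (dir_y i) (0, y)) has_derivative
        (\<lambda>h. \<chi> i. fderiv (dirderiv (dirderiv \<Psi> dir_t) (dir_y i)) (0, y) (0, h))) (at y)"
      using z by (intro has_derivative_vec_lambda has_derivative_slice_y[where S=S0] smooth_on_dirderiv smooth_psi)
    moreover have "(\<chi> i. fderiv (dirderiv (dirderiv \<Psi> dir_t) (dir_y i)) (0, y) (0, h)) = M *v h" for h
      using fderiv_y_eq_sum_dir_y[OF smooth_on_dirderiv[OF smooth_on_dirderiv[OF smooth_psi, of dir_t]] z]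
      by (simp add: vec_eq_iff M_def matrix_vector_mult_def transpose_def hess_t_def mult.commute)
    ultimately have dF: "(F has_derivative (\<lambda>h. - (M *v h))) (at y)"
      unfolding F_def[abs_def] using has_derivative_minus by fastforce
    have "invertible M" using det_hess_t[of 0 y] y eps by (simp add: M_def invertible_det_nz)
    then obtain M' where M': "M ** M' = mat 1" unfolding invertible_def by blast
    have "(\<lambda>h. - (M *v h)) \<circ> (\<lambda>h. - (M' *v h)) = id"
    proof
      fix h
      have "M *v (- (M' *v h)) = - (M *v (M' *v h))"
        using linear_neg[OF bounded_linear.linear[OF matrix_vector_mul_bounded_linear[of M]]] by simp
      then show "((\<lambda>h. - (M *v h)) \<circ> (\<lambda>h. - (M' *v h))) h = id h"
        by (simp add: matrix_vector_mul_assoc M')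
    qed
    then show "\<exists>F' g'. (F has_derivative F') (at y) \<and> bounded_linear g' \<and> F' \<circ> g' = id"
      using dF bounded_linear_minus[OF matrix_vector_mul_bounded_linear[of M']] by blast
  qed simp
qed

lemma curved_kakeya_to_lines:
  assumes E: "curved_kakeya \<phi> \<epsilon>0 E" and y: "y \<in> ball 0 \<epsilon>0"
  shows "\<exists>\<omega>\<in>ball 0 \<epsilon>0. {z\<in>U. \<kappa> z \<in> kcurve \<phi> \<epsilon>0 y (\<omega>, 0)} \<subseteq> {z\<in>U. \<kappa> z \<in> E}
     \<and> (\<exists>p. {z\<in>U. \<kappa> z \<in> kcurve \<phi> \<epsilon>0 y (\<omega>, 0)} = U \<inter> {p + s *\<^sub>R (- grad h0 y, 1) | s. True})"
proof -
  obtain \<omega> where w: "\<omega> \<in> ball 0 \<epsilon>0" and sub: "kcurve \<phi> \<epsilon>0 y (\<omega>, 0) \<subseteq> E"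
    using E y unfolding curved_kakeya_def by blast
  have y': "norm y < \<epsilon>0" using y by simp
  have "{z\<in>U. \<kappa> z \<in> kcurve \<phi> \<epsilon>0 y (\<omega>, 0)} = U \<inter> {(\<omega>, 0) + s *\<^sub>R (- grad h0 y, 1) | s. True}"
    using \<kappa>_in_dom_x grad_ti_phase_\<kappa>[OF _ y'] on_line_iff[of _ "grad h0 y" \<omega>]
      grad_ti_phase_base[OF _ y'] w
    by (auto simp: kcurve_def)
  moreover have "{z\<in>U. \<kappa> z \<in> kcurve \<phi> \<epsilon>0 y (\<omega>, 0)} \<subseteq> {z\<in>U. \<kappa> z \<in> E}" using sub by auto
  ultimately show ?thesis using w by blast
qed

end

theorem theorem1p12:
  fixes \<psi> :: "real \<Rightarrow> real^'n \<Rightarrow> real" and \<epsilon>0 :: real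
  defines "\<phi> \<equiv> ti_phase \<psi>"
  assumes dim: "CARD('n) \<ge> 2"
    and eps: "\<epsilon>0 > 0"
    and smooth: "smooth_on (ball 0 \<epsilon>0 \<times> ball 0 \<epsilon>0) (\<lambda>(t, y). \<psi> t y)"
    and psi0: "\<forall>y\<in>ball 0 \<epsilon>0. \<psi> 0 y = 0"
    and h1: "H1 \<phi> \<epsilon>0" and h2: "H2 \<phi> \<epsilon>0"
    and bourgain: "\<forall>X\<in>dom_x \<epsilon>0. \<forall>y0\<in>ball 0 \<epsilon>0. bourgain_at \<phi> X y0"
  shows "\<exists>\<epsilon>1 U \<kappa> h q f. 0 < \<epsilon>1 \<and> \<epsilon>1 \<le> \<epsilon>0 \<and> 0 \<in> U \<and> diffeo_on U \<kappa>
     \<and> \<kappa> ` U \<subseteq> dom_x \<epsilon>1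
     \<and> smooth_on (ball 0 \<epsilon>1) h \<and> smooth_on (ball 0 \<epsilon>1) q \<and> smooth_on (snd ` U) f
     \<and> (\<forall>y\<in>ball 0 \<epsilon>1. det (hess h y) \<noteq> 0)
     \<and> (\<forall>x t y. (x, t) \<in> U \<longrightarrow> y \<in> ball 0 \<epsilon>1 \<longrightarrow>
          \<phi> (\<kappa> (x, t)) y = x \<bullet> y + t * h y + q y + f t)
     \<and> (\<forall>y\<in>ball 0 \<epsilon>1. \<forall>z\<in>U.
          {z'\<in>U. grad (\<phi> (\<kappa> z')) y = grad (\<phi> (\<kappa> z)) y}
          = U \<inter> {z + s *\<^sub>R (- grad h y, 1) | s. True})
     \<and> open ((\<lambda>y. - grad h y) ` ball 0 \<epsilon>1)
     \<and> (\<forall>E. curved_kakeya \<phi> \<epsilon>1 E \<longrightarrow> (\<forall>y\<in>ball 0 \<epsilon>1. \<exists>\<omega>\<in>ball 0 \<epsilon>1.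
          {z\<in>U. \<kappa> z \<in> kcurve \<phi> \<epsilon>1 y (\<omega>, 0)} \<subseteq> {z\<in>U. \<kappa> z \<in> E}
          \<and> (\<exists>p. {z\<in>U. \<kappa> z \<in> kcurve \<phi> \<epsilon>1 y (\<omega>, 0)} = U \<inter> {p + s *\<^sub>R (- grad h y, 1) | s. True})))"
proof -
  interpret bourgain_phase \<psi> \<epsilon>0
    by unfold_locales (use eps smooth psi0 h2 bourgain dim in \<open>simp_all add: \<phi>_def\<close>)
  show ?thesis
    unfolding \<phi>_def
  proof (intro exI conjI)
    show "0 < \<epsilon>0" "\<epsilon>0 \<le> \<epsilon>0" by (simp_all add: eps)
    show "0 \<in> U" "diffeo_on U \<kappa>" "\<kappa> ` U \<subseteq> dom_x \<epsilon>0"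
      by (simp_all add: zero_in_U diffeo_on_\<kappa> image_\<kappa>)
    show "smooth_on (ball 0 \<epsilon>0) h0" "smooth_on (ball 0 \<epsilon>0) (\<lambda>y. 0::real)" "smooth_on (snd ` U) f0"
      by (simp_all add: smooth_h0 smooth_on_const smooth_f0)
    show "\<forall>y\<in>ball 0 \<epsilon>0. det (hess h0 y) \<noteq> 0"
      using hess_h0 det_hess_t eps by simp
    show "\<forall>x t y. (x, t) \<in> U \<longrightarrow> y \<in> ball 0 \<epsilon>0 \<longrightarrow>
        ti_phase \<psi> (\<kappa> (x, t)) y = x \<bullet> y + t * h0 y + 0 + f0 t"
      using ti_phase_\<kappa> by fastforce
    show "\<forall>y\<in>ball 0 \<epsilon>0. \<forall>z\<in>U. {z'\<in>U. grad (ti_phase \<psi> (\<kappa> z')) y = grad (ti_phase \<psi> (\<kappa> z)) y}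
        = U \<inter> {z + s *\<^sub>R (- grad h0 y, 1) | s. True}"
      using kakeya_curves_to_lines by simp
    show "open ((\<lambda>y. - grad h0 y) ` ball 0 \<epsilon>0)" by (rule open_image_grad_h0)
  qed (use curved_kakeya_to_lines in blast)
qed

end
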